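(* Let $\Theta$ be a compact subset of $(0,1/2)\times(\mathbb{R}^2\setminus\Delta)$, $\Delta=\{(x,x):x\in\mathbb{R}\}$. Let $f$ be a symmetric probability density on $\mathbb{R}$ with $f\in\mathbb{L}_2$ and $\int|f^*(u)|^2|u|^{2\beta}du\le L$ for some $\beta>0$, $L>0$. Let $W$ be the cumulative distribution function of a probability measure on $\mathbb{R}$, absolutely continuous with respect to Lebesgue measure with support $\mathbb{R}$, such that $\int(1+|u|+u^2+|u|^3)dW(u)<\infty$. Let $\theta_0=(p_0,\alpha_0,\beta_0)\in\Theta$ and let $X_1,\dots,X_n$ be i.i.d. with density $g(x)=p_0f(x-\alpha_0)+(1-p_0)f(x-\beta_0)$. For $\theta=(p,\alpha,\beta)\in\Theta$ let $M(\theta,u)=pe^{iu\alpha}+(1-p)e^{iu\beta}$, $$S_n(\theta)=\frac{-1}{4n(n-1)}\int_{|u|\le1/h}\sum_{j\ne k,\ j,k=1}^n\left(\frac{e^{iuX_k}}{M(\theta,u)}-\frac{e^{-iuX_k}}{M(\theta,-u)}\right)\left(\frac{e^{iuX_j}}{M(\theta,u)}-\frac{e^{-iuX_j}}{M(\theta,-u)}\right)dW(u),$$ with $h=h_n\to0$ as $n\to\infty$, and let $\hat\theta_n=\arg\min_{\theta\in\Theta}S_n(\theta)$. Then $\hat\theta_n$ converges in probability to $\theta_0$ as $n\to\infty$.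
   Context: $f^*(u)=\int e^{ixu}f(x)\,dx$ denotes the Fourier transform. *)

theory Defs
  imports "HOL-Probability.Probability"
begin

definition fourier_tr :: "(real \<Rightarrow> real) \<Rightarrow> real \<Rightarrow> complex" where
  "fourier_tr f u = (\<integral>x. exp (\<i> * complex_of_real (x * u)) * complex_of_real (f x) \<partial>lborel)"

definition Mchar :: "real \<times> real \<times> real \<Rightarrow> real \<Rightarrow> complex" where
  "Mchar \<theta> u = (case \<theta> of (p, a, b) \<Rightarrow>
      complex_of_real p * exp (\<i> * complex_of_real (u * a))
    + complex_of_real (1 - p) * exp (\<i> * complex_of_real (u * b)))"

definition Efac :: "real \<times> real \<times> real \<Rightarrow> real \<Rightarrow> real \<Rightarrow> complex" where
  "Efac \<theta> u x = exp (\<i> * complex_of_real (u * x)) / Mchar \<theta> u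
              - exp (- \<i> * complex_of_real (u * x)) / Mchar \<theta> (- u)"

text \<open>The contrast S_n(theta) evaluated at the sample point omega; W is the
  probability measure whose CDF is W.  The complex integral is real-valued
  (the integrand is real), so we take its real part.\<close>
definition Sn :: "real measure \<Rightarrow> (nat \<Rightarrow> 'w \<Rightarrow> real) \<Rightarrow> real \<Rightarrow> nat
                   \<Rightarrow> real \<times> real \<times> real \<Rightarrow> 'w \<Rightarrow> real" where
  "Sn W X h n \<theta> \<omega> = Re (complex_of_real (-1 / (4 * real n * (real n - 1))) *
     set_lebesgue_integral W {u. \<bar>u\<bar> \<le> 1 / h}
       (\<lambda>u. \<Sum>(j, k) \<in> {(j, k). j \<in> {1..n} \<and> k \<in> {1..n} \<and> j \<noteq> k}.
              Efac \<theta> u (X k \<omega>) * Efac \<theta> u (X j \<omega>)))"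

end

theory Submission
  imports Defs "HOL-Complex_Analysis.Conformal_Mappings"
begin

(* Put Y_\<theta>(u,x) = Im (e^{iux} / M(\<theta>,u)).  The factor in S_n equals 2i Y_\<theta>(u,X_k), so S_n(\<theta>) is
   the U-statistic (n(n-1))^{-1} \<integral>_{|u| \<le> 1/h} \<Sum>_{j\<noteq>k} Y_\<theta>(u,X_j) Y_\<theta>(u,X_k) dW(u), and
   E Y_\<theta>(u,X) = \<mu>_\<theta>(u) = f*(u) Im (M(\<theta>0,u) conj M(\<theta>,u)) / |M(\<theta>,u)|^2, where f* is real because f
   is symmetric.  The limit contrast S(\<theta>) = \<integral> \<mu>_\<theta>^2 dW vanishes exactly at \<theta>0: if S(\<theta>) = 0 then
   \<mu>_\<theta> = 0 (continuity and full support of W), so M(\<theta>0,u) conj M(\<theta>,u) is real near u = 0, where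
   f* \<noteq> 0; analytic continuation to the imaginary axis turns this into an identity between real
   exponential sums, which forces \<theta> = \<theta>0 because both weights are below 1/2.
   As |M(\<theta>,u)| \<ge> 1 - 2p is bounded below on \<Theta>, Y_\<theta> and \<mu>_\<theta> are bounded and Lipschitz in \<theta> with
   constant O(1 + |u|).  Comparing S_n with S through the points of a finite r-net of \<Theta> costs
   O(1/n + h + \<eta> + (r^2 + \<integral> (Ybar - \<mu>)^2 dW) / \<eta>), and the last integral has mean O(1/n).  By
   Markov's inequality the minimiser of S_n therefore lies, with probability tending to one,
   where S is small, i.e. (by compactness) close to \<theta>0. *)

definition exp_mixture :: "real \<Rightarrow> real \<Rightarrow> real \<Rightarrow> real \<Rightarrow> real" where
  "exp_mixture p a b t = p * exp (a * t) + (1 - p) * exp (b * t)"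

lemma exp_mixture_eq_cosh_tanh:
  fixes p a b t :: real
  shows "exp_mixture p a b t
    = exp ((a + b) / 2 * t) * (cosh ((a - b) / 2 * t) * (1 - (1 - 2 * p) * tanh ((a - b) / 2 * t)))"
proof -
  define s d where "s = (a + b) / 2 * t" and "d = (a - b) / 2 * t"
  have "cosh d * (1 - (1 - 2 * p) * tanh d) = cosh d - (1 - 2 * p) * sinh d"
    by (simp add: tanh_def algebra_simps)
  also have "\<dots> = p * exp d + (1 - p) * exp (- d)"
    by (simp add: cosh_def sinh_def scaleR_conv_of_real field_simps)
  finally have "exp s * (cosh d * (1 - (1 - 2 * p) * tanh d)) = exp s * (p * exp d + (1 - p) * exp (- d))"
    by simp
  also have "\<dots> = p * exp (s + d) + (1 - p) * exp (s - d)"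
    by (simp add: algebra_simps flip: exp_add)
  moreover have "a * t = s + d" "b * t = s - d" by (simp_all add: s_def d_def field_simps)
  ultimately show ?thesis by (simp add: exp_mixture_def s_def d_def)
qed

lemma exp_linear_bounded_imp_zero:
  fixes c U :: real
  assumes "\<And>t. exp (c * t) \<le> U"
  shows "c = 0"
proof (rule ccontr)
  assume "c \<noteq> 0"
  have "0 < U" using assms[of 0] by simp
  have "exp (ln U + 1) \<le> U" using assms[of "(ln U + 1) / c"] \<open>c \<noteq> 0\<close> by simp
  then show False using \<open>0 < U\<close> by (simp add: exp_add)
qed

lemma exp_balance_bounded_imp_zero:
  fixes c m M :: real and f g :: "real \<Rightarrow> real"
  assumes eq: "\<And>t. exp (c * t) * (f t * g (- t)) = f (- t) * g t"
    and "0 < m" and f: "\<And>t. m \<le> f t \<and> f t \<le> M" and g: "\<And>t. m \<le> g t \<and> g t \<le> M"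
  shows "c = 0"
proof (rule exp_linear_bounded_imp_zero)
  fix t
  have "exp (c * t) * (m * m) \<le> exp (c * t) * (f t * g (- t))"
    using f[of t] g[of "- t"] \<open>0 < m\<close> by (intro mult_left_mono mult_mono) auto
  also have "\<dots> \<le> M * M"
    unfolding eq using f[of "- t"] g[of t] \<open>0 < m\<close> by (intro mult_mono) auto
  finally show "exp (c * t) \<le> M * M / (m * m)" using \<open>0 < m\<close> by (simp add: field_simps)
qed

lemma tanh_double_real: "tanh (2 * x :: real) = 2 * tanh x / (1 + (tanh x)\<^sup>2)"
  using tanh_add[of x x] by (simp add: power2_eq_square)

lemma abs_scaled_tanh_le: "0 < c \<Longrightarrow> \<bar>c * tanh x\<bar> \<le> c" for c x :: real
  using tanh_real_bounds[of x] by (simp add: abs_mult mult_left_le abs_le_iff)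

lemma scaled_tanh_eq_imp_eq:
  fixes k k0 d d0 :: real
  assumes "0 < k" "0 < k0" "d \<noteq> 0" "d0 \<noteq> 0"
    and eq: "\<And>t. k * tanh (d * t) = k0 * tanh (d0 * t)"
  shows "k = k0 \<and> d = d0"
proof -
  define \<tau> \<tau>0 where "\<tau> = tanh d" and "\<tau>0 = tanh d0"
  have "\<tau> \<noteq> 0" "\<tau>0 \<noteq> 0" using assms by (simp_all add: \<tau>_def \<tau>0_def)
  have 1: "k * \<tau> = k0 * \<tau>0" using eq[of 1] by (simp add: \<tau>_def \<tau>0_def)
  have "k * (2 * \<tau> / (1 + \<tau>\<^sup>2)) = k0 * (2 * \<tau>0 / (1 + \<tau>0\<^sup>2))"
    using eq[of 2] by (simp add: mult.commute[of _ 2] tanh_double_real \<tau>_def \<tau>0_def)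
  moreover have "0 < 1 + \<tau>\<^sup>2" "0 < 1 + \<tau>0\<^sup>2" by (simp_all add: add_pos_nonneg)
  ultimately have "k * \<tau> * (1 + \<tau>0\<^sup>2) = k0 * \<tau>0 * (1 + \<tau>\<^sup>2)"
    by (simp add: field_simps)
  then have "k0 * \<tau>0 * (1 + \<tau>0\<^sup>2) = k0 * \<tau>0 * (1 + \<tau>\<^sup>2)"
    by (simp only: 1)
  then have "1 + \<tau>\<^sup>2 = 1 + \<tau>0\<^sup>2"
    using \<open>\<tau>0 \<noteq> 0\<close> \<open>0 < k0\<close> by simp
  then have "\<tau> = \<tau>0 \<or> \<tau> = - \<tau>0" by (simp add: power2_eq_iff)
  moreover have "0 < \<tau> * \<tau>0"
  proof -
    have "0 < k * \<tau> * (k0 * \<tau>0)"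
      unfolding 1 using \<open>\<tau>0 \<noteq> 0\<close> \<open>0 < k0\<close>
      by (auto simp: zero_less_mult_iff mult_less_0_iff linorder_neq_iff)
    then show ?thesis using assms(1,2) by (auto simp: zero_less_mult_iff mult_less_0_iff)
  qed
  ultimately have "\<tau> = \<tau>0" by auto
  then show ?thesis using 1 \<open>\<tau>0 \<noteq> 0\<close> by (simp add: \<tau>_def \<tau>0_def)
qed

text \<open>With k = 1 - 2p \<in> (0,1) the mixture is e^{st} cosh(dt) (1 - k tanh(dt)).  The identity
  first forces equal centres s (otherwise an exponential would stay bounded), and then
  k tanh(dt) = k0 tanh(d0 t) for all t.\<close>
lemma exp_mixture_identity_imp_eq:
  fixes p a b p0 a0 b0 :: real
  assumes p: "0 < p" "p < 1/2" and p0: "0 < p0" "p0 < 1/2" and "a \<noteq> b" "a0 \<noteq> b0"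
    and H: "\<And>t. exp_mixture p0 a0 b0 t * exp_mixture p a b (- t)
               = exp_mixture p0 a0 b0 (- t) * exp_mixture p a b t"
  shows "p = p0 \<and> a = a0 \<and> b = b0"
proof -
  define s where "s = (a + b) / 2"
  define d where "d = (a - b) / 2"
  define k where "k = 1 - 2 * p"
  define s0 where "s0 = (a0 + b0) / 2"
  define d0 where "d0 = (a0 - b0) / 2"
  define k0 where "k0 = 1 - 2 * p0"
  have k: "0 < k" "k < 1" and k0: "0 < k0" "k0 < 1" using p p0 by (simp_all add: k_def k0_def)
  define \<nu> where "\<nu> t = 1 - k * tanh (d * t)" for t
  define \<nu>0 where "\<nu>0 t = 1 - k0 * tanh (d0 * t)" for t
  have \<nu>: "1 - k \<le> \<nu> t" "\<nu> t \<le> 1 + k" for t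
    using abs_scaled_tanh_le[OF k(1), of "d * t"] by (auto simp: \<nu>_def abs_le_iff)
  have \<nu>0: "1 - k0 \<le> \<nu>0 t" "\<nu>0 t \<le> 1 + k0" for t
    using abs_scaled_tanh_le[OF k0(1), of "d0 * t"] by (auto simp: \<nu>0_def abs_le_iff)
  have mix: "exp_mixture p a b t = exp (s * t) * (cosh (d * t) * \<nu> t)" for t
    by (simp add: exp_mixture_eq_cosh_tanh s_def d_def k_def \<nu>_def)
  have mix0: "exp_mixture p0 a0 b0 t = exp (s0 * t) * (cosh (d0 * t) * \<nu>0 t)" for t
    by (simp add: exp_mixture_eq_cosh_tanh s0_def d0_def k0_def \<nu>0_def)
  have balance: "exp (2 * (s0 - s) * t) * (\<nu>0 t * \<nu> (- t)) = \<nu>0 (- t) * \<nu> t" for t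
  proof -
    define E where "E = exp ((s0 - s) * t)"
    have "E > 0" by (simp add: E_def)
    have "exp (s0 * t) * exp (- (s * t)) = E" "exp (s * t) * exp (- (s0 * t)) = 1 / E"
      by (simp_all add: E_def left_diff_distrib exp_diff exp_minus divide_inverse)
    moreover have "cosh (d0 * t) * cosh (d * t)
        * (exp (s0 * t) * exp (- (s * t)) * (\<nu>0 t * \<nu> (- t)))
      = cosh (d0 * t) * cosh (d * t) * (exp (s * t) * exp (- (s0 * t)) * (\<nu>0 (- t) * \<nu> t))"
      using H[of t] by (simp add: mix mix0 algebra_simps)
    ultimately have "cosh (d0 * t) * cosh (d * t) * (E * (\<nu>0 t * \<nu> (- t)))
      = cosh (d0 * t) * cosh (d * t) * (1 / E * (\<nu>0 (- t) * \<nu> t))"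
      by (simp only:)
    then have "E * (\<nu>0 t * \<nu> (- t)) = 1 / E * (\<nu>0 (- t) * \<nu> t)"
      by (subst (asm) mult_cancel_left) simp
    moreover have "exp (2 * (s0 - s) * t) = E * E"
      by (simp add: E_def algebra_simps flip: exp_add)
    ultimately show ?thesis using \<open>E > 0\<close> by (simp add: field_simps)
  qed
  have "2 * (s0 - s) = 0"
  proof (rule exp_balance_bounded_imp_zero[OF balance])
    show "0 < min (1 - k) (1 - k0)" using k k0 by simp
    show "min (1 - k) (1 - k0) \<le> \<nu>0 t \<and> \<nu>0 t \<le> max (1 + k) (1 + k0)"
      "min (1 - k) (1 - k0) \<le> \<nu> t \<and> \<nu> t \<le> max (1 + k) (1 + k0)" for t
      using \<nu>[of t] \<nu>0[of t] by auto
  qed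
  then have "s0 = s" by simp
  have "k * tanh (d * t) = k0 * tanh (d0 * t)" for t
    using balance[of t] \<open>s0 = s\<close> by (simp add: \<nu>_def \<nu>0_def algebra_simps)
  moreover have "d \<noteq> 0" "d0 \<noteq> 0" using assms by (simp_all add: d_def d0_def)
  ultimately have "k = k0 \<and> d = d0"
    using scaled_tanh_eq_imp_eq[OF k(1) k0(1)] by blast
  then show ?thesis using \<open>s0 = s\<close>
    by (simp add: k_def k0_def s_def s0_def d_def d0_def)
qed

definition Mchar_complex :: "real \<times> real \<times> real \<Rightarrow> complex \<Rightarrow> complex" where
  "Mchar_complex \<theta> z = (case \<theta> of (p, a, b) \<Rightarrow>
     of_real p * exp (\<i> * z * of_real a) + of_real (1 - p) * exp (\<i> * z * of_real b))"

lemma Mchar_complex_of_real: "Mchar_complex \<theta> (of_real u) = Mchar \<theta> u"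
  by (cases \<theta>) (simp add: Mchar_complex_def Mchar_def mult.assoc)

lemma Mchar_complex_uminus_of_real: "Mchar_complex \<theta> (- of_real u) = cnj (Mchar \<theta> u)"
  by (cases \<theta>) (simp add: Mchar_complex_def Mchar_def exp_cnj mult.assoc)

lemma Mchar_complex_imaginary:
  "Mchar_complex (p, a, b) (- (\<i> * of_real t)) = of_real (exp_mixture p a b t)"
  "Mchar_complex (p, a, b) (\<i> * of_real t) = of_real (exp_mixture p a b (- t))"
proof -
  have "\<i> * (- (\<i> * of_real s)) * of_real c = of_real (c * s)" for c s
    by (simp add: algebra_simps)
  then have *: "Mchar_complex (p, a, b) (- (\<i> * of_real s)) = of_real (exp_mixture p a b s)" for s
    by (simp add: Mchar_complex_def exp_mixture_def mult.commute flip: exp_of_real)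
  show "Mchar_complex (p, a, b) (- (\<i> * of_real t)) = of_real (exp_mixture p a b t)"
    by (rule *)
  show "Mchar_complex (p, a, b) (\<i> * of_real t) = of_real (exp_mixture p a b (- t))"
    using *[of "- t"] by simp
qed

lemma zero_islimpt_real_interval: "0 < \<delta> \<Longrightarrow> 0 islimpt (complex_of_real ` {-\<delta><..<\<delta>})"
  unfolding islimpt_approachable
proof (intro allI impI)
  fix e :: real assume "0 < \<delta>" "0 < e"
  then show "\<exists>x\<in>complex_of_real ` {-\<delta><..<\<delta>}. x \<noteq> 0 \<and> dist x 0 < e"
    by (intro bexI[of _ "of_real (min \<delta> e / 2)"] rev_image_eqI[of "min \<delta> e / 2"]) auto
qed

lemma Mchar_identifiable_near_zero:
  fixes p a b p0 a0 b0 \<delta> :: real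
  assumes "0 < p" "p < 1/2" "0 < p0" "p0 < 1/2" "a \<noteq> b" "a0 \<noteq> b0" and "0 < \<delta>"
    and real_near_zero: "\<And>u. \<bar>u\<bar> < \<delta> \<Longrightarrow> Im (Mchar (p0, a0, b0) u * cnj (Mchar (p, a, b) u)) = 0"
  shows "(p, a, b) = (p0, a0, b0)"
proof -
  define H where "H z = Mchar_complex (p0, a0, b0) z * Mchar_complex (p, a, b) (- z)
                      - Mchar_complex (p0, a0, b0) (- z) * Mchar_complex (p, a, b) z" for z
  have H_real_zero: "H z = 0" if z: "z \<in> complex_of_real ` {-\<delta><..<\<delta>}" for z
  proof -
    obtain u where u: "z = of_real u" "\<bar>u\<bar> < \<delta>" using z by (auto simp: abs_less_iff)
    let ?w = "Mchar (p0, a0, b0) u * cnj (Mchar (p, a, b) u)"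
    have "H z = ?w - cnj ?w"
      using u by (simp add: H_def Mchar_complex_of_real Mchar_complex_uminus_of_real mult.commute)
    then show ?thesis using real_near_zero[OF u(2)] by (simp add: complex_eq_iff)
  qed
  have "H holomorphic_on UNIV"
    unfolding H_def Mchar_complex_def prod.case by (intro holomorphic_intros)
  then have H_zero: "H z = 0" for z
    by (rule analytic_continuation[OF _ open_UNIV connected_UNIV _ _
          zero_islimpt_real_interval[OF \<open>0 < \<delta>\<close>] H_real_zero]) auto
  have "of_real (exp_mixture p0 a0 b0 t * exp_mixture p a b (- t)
      - exp_mixture p0 a0 b0 (- t) * exp_mixture p a b t) = H (- (\<i> * of_real t))" for t
    unfolding H_def minus_minus Mchar_complex_imaginary by simp
  then have "exp_mixture p0 a0 b0 t * exp_mixture p a b (- t)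
      = exp_mixture p0 a0 b0 (- t) * exp_mixture p a b t" for t
    unfolding H_zero of_real_eq_0_iff by simp
  from exp_mixture_identity_imp_eq[OF assms(1-6) this] show ?thesis by simp
qed

definition Yim :: "real \<times> real \<times> real \<Rightarrow> real \<Rightarrow> real \<Rightarrow> real" where
  "Yim \<theta> u x = Im (exp (\<i> * complex_of_real (u * x)) / Mchar \<theta> u)"

definition Y_offdiag :: "(nat \<Rightarrow> 'w \<Rightarrow> real) \<Rightarrow> nat \<Rightarrow> real \<times> real \<times> real \<Rightarrow> 'w \<Rightarrow> real \<Rightarrow> real" where
  "Y_offdiag X n \<theta> \<omega> u = (\<Sum>j\<in>{1..n}. Yim \<theta> u (X j \<omega>))\<^sup>2 - (\<Sum>j\<in>{1..n}. (Yim \<theta> u (X j \<omega>))\<^sup>2)"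

lemma Mchar_uminus: "Mchar \<theta> (- u) = cnj (Mchar \<theta> u)"
  by (cases \<theta>) (simp add: Mchar_def exp_cnj)

lemma Efac_eq_Yim: "Efac \<theta> u x = 2 * \<i> * complex_of_real (Yim \<theta> u x)"
proof -
  define z where "z = exp (\<i> * complex_of_real (u * x)) / Mchar \<theta> u"
  have "Efac \<theta> u x = z - cnj z"
    by (simp add: Efac_def z_def Mchar_uminus exp_cnj)
  also have "\<dots> = 2 * \<i> * complex_of_real (Im z)"
    by (simp add: complex_eq_iff)
  finally show ?thesis by (simp add: Yim_def z_def)
qed

lemma Efac_mult_Efac: "Efac \<theta> u x * Efac \<theta> u y = complex_of_real (- 4 * (Yim \<theta> u x * Yim \<theta> u y))"
  by (simp add: Efac_eq_Yim algebra_simps)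

lemma sum_offdiag_products:
  fixes y :: "'b \<Rightarrow> 'a :: comm_ring_1"
  assumes "finite A"
  shows "(\<Sum>(j, k) \<in> {(j, k). j \<in> A \<and> k \<in> A \<and> j \<noteq> k}. y k * y j) = (\<Sum>j\<in>A. y j)\<^sup>2 - (\<Sum>j\<in>A. (y j)\<^sup>2)"
proof -
  define P where "P = {(j, k). j \<in> A \<and> k \<in> A \<and> j \<noteq> k}"
  define D where "D = (\<lambda>j. (j, j)) ` A"
  have AA: "A \<times> A = P \<union> D" "P \<inter> D = {}" by (auto simp: P_def D_def)
  have "finite P" "finite D" using assms AA(1) by (metis finite_SigmaI finite_Un)+
  have "(\<Sum>j\<in>A. y j)\<^sup>2 = (\<Sum>(j, k)\<in>A \<times> A. y k * y j)"
    by (simp add: power2_eq_square sum_product sum.cartesian_product mult.commute)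
  also have "\<dots> = (\<Sum>(j, k)\<in>P. y k * y j) + (\<Sum>(j, k)\<in>D. y k * y j)"
    unfolding AA(1) by (rule sum.union_disjoint) fact+
  also have "(\<Sum>(j, k)\<in>D. y k * y j) = (\<Sum>j\<in>A. (y j)\<^sup>2)"
    unfolding D_def by (subst sum.reindex) (auto simp: inj_on_def power2_eq_square)
  finally show ?thesis by (simp add: P_def)
qed

lemma Sn_eq_Y_offdiag:
  "Sn W X h n \<theta> \<omega> = (LINT u:{u. \<bar>u\<bar> \<le> 1 / h}|W. Y_offdiag X n \<theta> \<omega> u) / (real n * (real n - 1))"
proof -
  let ?P = "{(j, k). j \<in> {1..n} \<and> k \<in> {1..n} \<and> j \<noteq> k}"
  have "(\<Sum>(j, k) \<in> ?P. Efac \<theta> u (X k \<omega>) * Efac \<theta> u (X j \<omega>))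
      = (\<Sum>(j, k) \<in> ?P. complex_of_real (- 4 * (Yim \<theta> u (X k \<omega>) * Yim \<theta> u (X j \<omega>))))" for u
    by (intro sum.cong refl) (auto simp: Efac_mult_Efac)
  also have "\<dots> u = complex_of_real (- 4 * (\<Sum>(j, k) \<in> ?P. Yim \<theta> u (X k \<omega>) * Yim \<theta> u (X j \<omega>)))" for u
    by (simp only: case_prod_unfold of_real_sum sum_distrib_left)
  also have "\<dots> u = complex_of_real (- 4 * Y_offdiag X n \<theta> \<omega> u)" for u
    by (simp only: sum_offdiag_products[OF finite_atLeastAtMost] Y_offdiag_def)
  finally have "(\<Sum>(j, k) \<in> ?P. Efac \<theta> u (X k \<omega>) * Efac \<theta> u (X j \<omega>))
      = complex_of_real (- 4 * Y_offdiag X n \<theta> \<omega> u)" for u .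
  then have "Sn W X h n \<theta> \<omega> = - 1 / (4 * real n * (real n - 1))
      * (LINT u:{u. \<bar>u\<bar> \<le> 1 / h}|W. - 4 * Y_offdiag X n \<theta> \<omega> u)"
    by (simp only: Sn_def set_integral_complex_of_real Re_complex_of_real flip: of_real_mult)
  also have "\<dots> = - 1 / (4 * (real n * (real n - 1)))
      * (- 4 * (LINT u:{u. \<bar>u\<bar> \<le> 1 / h}|W. Y_offdiag X n \<theta> \<omega> u))"
    by (simp only: set_integral_mult_right mult.assoc)
  finally show ?thesis by (simp add: divide_simps)
qed

lemma norm_Mchar_ge:
  assumes "0 \<le> p" "p \<le> 1/2"
  shows "1 - 2 * p \<le> cmod (Mchar (p, a, b) u)"
proof -
  let ?A = "of_real p * exp (\<i> * complex_of_real (u * a))"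
    and ?B = "of_real (1 - p) * exp (\<i> * complex_of_real (u * b))"
  have "cmod ?B - cmod ?A \<le> cmod (?B + ?A)" by (rule norm_diff_ineq)
  moreover have "cmod ?A = p" "cmod ?B = 1 - p"
    using assms by (simp_all add: norm_mult del: of_real_diff)
  ultimately show ?thesis by (simp add: Mchar_def add.commute)
qed

lemma norm_exp_i_mult_diff_le:
  "cmod (exp (\<i> * complex_of_real (u * a)) - exp (\<i> * complex_of_real (u * a'))) \<le> \<bar>u\<bar> * \<bar>a - a'\<bar>"
proof -
  have "exp (\<i> * complex_of_real (u * a)) - exp (\<i> * complex_of_real (u * a'))
      = exp (\<i> * complex_of_real (u * a')) * (exp (\<i> * complex_of_real (u * a - u * a')) - 1)"
    by (simp add: algebra_simps flip: exp_add)
  then have "cmod (exp (\<i> * complex_of_real (u * a)) - exp (\<i> * complex_of_real (u * a')))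
      = cmod (exp (\<i> * complex_of_real (u * a - u * a')) - 1)"
    by (simp add: norm_mult)
  also have "\<dots> \<le> \<bar>u * a - u * a'\<bar>"
    using iexp_approx1[of "u * a - u * a'" 0] by simp
  finally show ?thesis by (simp add: abs_mult flip: right_diff_distrib)
qed

lemma norm_Mchar_diff_le:
  fixes p a b p' a' b' :: real
  assumes "0 \<le> p'" "p' \<le> 1"
  shows "cmod (Mchar (p, a, b) u - Mchar (p', a', b') u) \<le> (2 + 2 * \<bar>u\<bar>) * dist (p, a, b) (p', a', b')"
proof -
  define e where "e x = exp (\<i> * complex_of_real (u * x))" for x
  define r where "r = dist (p, a, b) (p', a', b')"
  have dp: "\<bar>p - p'\<bar> \<le> r" and dab: "dist (a, b) (a', b') \<le> r"
    using dist_fst_le[of "(p, a, b)" "(p', a', b')"] dist_snd_le[of "(p, a, b)" "(p', a', b')"]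
    by (simp_all add: r_def dist_real_def)
  have "\<bar>a - a'\<bar> \<le> r" "\<bar>b - b'\<bar> \<le> r"
    using dab dist_fst_le[of "(a, b)" "(a', b')"] dist_snd_le[of "(a, b)" "(a', b')"]
    by (simp_all add: dist_real_def)
  then have "\<bar>u\<bar> * \<bar>a - a'\<bar> \<le> \<bar>u\<bar> * r" "\<bar>u\<bar> * \<bar>b - b'\<bar> \<le> \<bar>u\<bar> * r"
    by (simp_all add: mult_left_mono)
  then have na: "cmod (e a - e a') \<le> \<bar>u\<bar> * r" and nb: "cmod (e b - e b') \<le> \<bar>u\<bar> * r"
    unfolding e_def using norm_exp_i_mult_diff_le[of u a a'] norm_exp_i_mult_diff_le[of u b b'] by linarith+
  have "Mchar (p, a, b) u - Mchar (p', a', b') u =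
      of_real (p - p') * e a + of_real p' * (e a - e a')
      + of_real (p' - p) * e b + of_real (1 - p') * (e b - e b')"
    by (simp add: Mchar_def e_def algebra_simps)
  also have "cmod \<dots> \<le> cmod (of_real (p - p') * e a) + cmod (of_real p' * (e a - e a'))
      + cmod (of_real (p' - p) * e b) + cmod (of_real (1 - p') * (e b - e b'))"
    by (intro order.trans[OF norm_triangle_ineq] add_mono order_refl)
  also have "\<dots> = \<bar>p - p'\<bar> + p' * cmod (e a - e a') + \<bar>p - p'\<bar> + (1 - p') * cmod (e b - e b')"
    using assms by (simp add: norm_mult e_def abs_minus_commute del: of_real_diff)
  also have "\<dots> \<le> r + 1 * (\<bar>u\<bar> * r) + r + 1 * (\<bar>u\<bar> * r)"
    using assms dp na nb by (intro add_mono mult_mono) auto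
  finally show ?thesis by (simp add: r_def algebra_simps)
qed

lemma abs_Yim_le:
  assumes "0 < c" "c \<le> cmod (Mchar \<theta> u)"
  shows "\<bar>Yim \<theta> u x\<bar> \<le> 1 / c"
proof -
  have "\<bar>Yim \<theta> u x\<bar> \<le> cmod (exp (\<i> * complex_of_real (u * x)) / Mchar \<theta> u)"
    unfolding Yim_def by (rule abs_Im_le_cmod)
  also have "\<dots> = 1 / cmod (Mchar \<theta> u)" by (simp add: norm_divide)
  also have "\<dots> \<le> 1 / c" using assms by (intro divide_left_mono mult_pos_pos) auto
  finally show ?thesis .
qed

lemma abs_Yim_diff_le:
  assumes "0 < c" "c \<le> cmod (Mchar \<theta> u)" "c \<le> cmod (Mchar \<theta>' u)"
    and "cmod (Mchar \<theta> u - Mchar \<theta>' u) \<le> K"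
  shows "\<bar>Yim \<theta> u x - Yim \<theta>' u x\<bar> \<le> K / c^2"
proof -
  define e where "e = exp (\<i> * complex_of_real (u * x))"
  have M0: "Mchar \<theta> u \<noteq> 0" "Mchar \<theta>' u \<noteq> 0" using assms by auto
  have K0: "0 \<le> K" using assms(4) norm_ge_zero order_trans by blast
  have "\<bar>Yim \<theta> u x - Yim \<theta>' u x\<bar> = \<bar>Im (e / Mchar \<theta> u - e / Mchar \<theta>' u)\<bar>" by (simp add: Yim_def e_def)
  also have "\<dots> \<le> cmod (e / Mchar \<theta> u - e / Mchar \<theta>' u)" by (rule abs_Im_le_cmod)
  also have "e / Mchar \<theta> u - e / Mchar \<theta>' u = e * (Mchar \<theta>' u - Mchar \<theta> u) / (Mchar \<theta> u * Mchar \<theta>' u)"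
    using M0 by (simp add: field_simps)
  also have "cmod \<dots> = cmod (Mchar \<theta> u - Mchar \<theta>' u) / (cmod (Mchar \<theta> u) * cmod (Mchar \<theta>' u))"
    by (simp add: norm_mult norm_divide e_def norm_minus_commute)
  also have "\<dots> \<le> K / (c * c)"
    using assms K0 by (intro frac_le mult_mono mult_pos_pos) auto
  finally show ?thesis by (simp add: power2_eq_square)
qed

lemma continuous_on_Mchar: "continuous_on UNIV (Mchar \<theta>)"
  by (cases \<theta>) (auto simp: Mchar_def intro!: continuous_intros)

lemma isCont_Mchar: "isCont (Mchar \<theta>) u"
  using continuous_on_Mchar continuous_on_eq_continuous_at by blast

lemma Mchar_measurable[measurable]: "Mchar \<theta> \<in> borel_measurable borel"
  using continuous_on_Mchar by (rule borel_measurable_continuous_onI)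

lemma Yim_measurable[measurable]:
  assumes [measurable]: "a \<in> borel_measurable N" "b \<in> borel_measurable N"
  shows "(\<lambda>x. Yim \<theta> (a x) (b x)) \<in> borel_measurable N"
  unfolding Yim_def by measurable

lemma abs_offdiag_mean_sub_square_le:
  fixes N y s B :: real
  assumes "2 \<le> N" "\<bar>y\<bar> \<le> B" "0 \<le> s" "s \<le> N * B\<^sup>2"
  shows "\<bar>(N\<^sup>2 * y\<^sup>2 - s) / (N * (N - 1)) - y\<^sup>2\<bar> \<le> 2 * B\<^sup>2 / (N - 1)"
proof -
  have "0 < N - 1" using assms(1) by simp
  have "y\<^sup>2 \<le> B\<^sup>2" using power_mono[OF assms(2) abs_ge_zero, of 2] by simp
  have eq: "(N\<^sup>2 * y\<^sup>2 - s) / (N * (N - 1)) - y\<^sup>2 = y\<^sup>2 / (N - 1) - s / (N * (N - 1))"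
    using assms(1) by (simp add: divide_simps) (simp add: algebra_simps power2_eq_square)
  have "y\<^sup>2 / (N - 1) \<le> B\<^sup>2 / (N - 1)"
    using \<open>y\<^sup>2 \<le> B\<^sup>2\<close> \<open>0 < N - 1\<close> by (simp add: divide_right_mono)
  moreover have "s / (N * (N - 1)) \<le> (N * B\<^sup>2) / (N * (N - 1))"
    using assms(1,4) \<open>0 < N - 1\<close> by (intro divide_right_mono) auto
  moreover have "(N * B\<^sup>2) / (N * (N - 1)) = B\<^sup>2 / (N - 1)" using assms(1) by simp
  moreover have "0 \<le> y\<^sup>2 / (N - 1)" "0 \<le> s / (N * (N - 1))"
    using assms(1,3) \<open>0 < N - 1\<close> by simp_all
  ultimately show ?thesis unfolding eq by linarith
qed

text \<open>Young's inequality 2 B x \<le> \<eta> + B^2 x^2 / \<eta> applied to x = |y - m|.\<close>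
lemma abs_square_diff_le:
  fixes y m B \<eta> :: real
  assumes "\<bar>y\<bar> \<le> B" "\<bar>m\<bar> \<le> B" "0 < \<eta>"
  shows "\<bar>y\<^sup>2 - m\<^sup>2\<bar> \<le> \<eta> + B\<^sup>2 / \<eta> * (y - m)\<^sup>2"
proof -
  define x where "x = \<bar>y - m\<bar>"
  have "\<bar>y\<^sup>2 - m\<^sup>2\<bar> = \<bar>y + m\<bar> * x"
    by (simp add: x_def power2_eq_square abs_mult[symmetric] algebra_simps)
  also have "\<dots> \<le> (2 * B) * x" using assms by (intro mult_right_mono) (auto simp: x_def)
  also have "\<dots> \<le> \<eta> + B\<^sup>2 / \<eta> * x\<^sup>2"
  proof -
    have "0 \<le> (B * x - \<eta>)\<^sup>2 / \<eta>" using assms(3) by simp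
    also have "\<dots> = B\<^sup>2 / \<eta> * x\<^sup>2 - 2 * B * x + \<eta>"
      using assms(3) by (simp add: power2_eq_square field_simps)
    finally show ?thesis by simp
  qed
  finally show ?thesis by (simp add: x_def)
qed

lemma power2_le_sum_power2_diff: "(a::real)\<^sup>2 \<le> 2 * b\<^sup>2 + 2 * (a - b)\<^sup>2"
  using zero_le_power2[of "a - 2 * b"] by (simp add: power2_eq_square algebra_simps)

lemma compact_finite_net:
  fixes K :: "'a::metric_space set"
  assumes "compact K" "x \<in> K" "0 < r"
  obtains N where "finite N" "N \<subseteq> K" "x \<in> N" "\<And>y. y \<in> K \<Longrightarrow> \<exists>t\<in>N. dist y t < r"
proof -
  obtain N where "N \<subseteq> K" "finite N" "K \<subseteq> (\<Union>t\<in>N. ball t r)"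
    by (rule compactE_image[OF assms(1), of K "\<lambda>t. ball t r"]) (use assms(3) in auto)
  then have "\<exists>t\<in>insert x N. dist y t < r" if "y \<in> K" for y
    using that by (force simp: dist_commute)
  then show ?thesis
    using that[of "insert x N"] \<open>N \<subseteq> K\<close> \<open>finite N\<close> assms(2) by auto
qed

lemma (in prob_space) abs_integral_le_const:
  fixes F :: "'a \<Rightarrow> real"
  assumes "F \<in> borel_measurable M" and "\<And>x. \<bar>F x\<bar> \<le> K"
  shows "\<bar>\<integral>x. F x \<partial>M\<bar> \<le> K"
proof -
  have "integrable M F" by (rule integrable_const_bound[where B = K]) (use assms in auto)
  then have "\<bar>\<integral>x. F x \<partial>M\<bar> \<le> (\<integral>x. K \<partial>M)"
    using assms(2) by (intro order.trans[OF integral_abs_bound] integral_mono) auto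
  then show ?thesis by (simp add: prob_space)
qed

lemma (in prob_space) expectation_square_mean_le:
  fixes Z :: "nat \<Rightarrow> 'a \<Rightarrow> real"
  assumes meas[measurable]: "\<And>j. Z j \<in> borel_measurable M"
    and bound: "\<And>j x. \<bar>Z j x\<bar> \<le> K"
    and centred: "\<And>j. expectation (Z j) = 0"
    and indep: "\<And>j k. j \<noteq> k \<Longrightarrow> indep_var borel (Z j) borel (Z k)"
    and "1 \<le> n"
  shows "expectation (\<lambda>x. ((\<Sum>j\<in>{1..n}. Z j x) / real n)\<^sup>2) \<le> K\<^sup>2 / real n"
proof -
  have K: "0 \<le> K" using bound[of 0 undefined] by linarith
  have abs_prod: "\<bar>Z j x * Z k x\<bar> \<le> K\<^sup>2" for j k x
    unfolding abs_mult power2_eq_square using K bound by (intro mult_mono) auto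
  have int_Z: "integrable M (Z j)" for j
    by (rule integrable_const_bound[where B = K]) (simp_all add: bound)
  have int_prod: "integrable M (\<lambda>x. Z j x * Z k x)" for j k
    by (rule integrable_const_bound[where B = "K\<^sup>2"]) (simp_all add: abs_prod)
  have cross: "expectation (\<lambda>x. Z j x * Z k x) = (if j = k then expectation (\<lambda>x. (Z j x)\<^sup>2) else 0)" for j k
    using indep_var_lebesgue_integral[OF indep int_Z int_Z, of j k] centred
    by (auto simp: power2_eq_square)
  have "expectation (\<lambda>x. ((\<Sum>j\<in>{1..n}. Z j x) / real n)\<^sup>2)
      = (\<Sum>j\<in>{1..n}. \<Sum>k\<in>{1..n}. expectation (\<lambda>x. Z j x * Z k x)) / (real n)\<^sup>2"
    by (simp add: power_divide power2_eq_square sum_product int_prod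
        Bochner_Integration.integral_sum Bochner_Integration.integrable_sum)
  also have "\<dots> = (\<Sum>j\<in>{1..n}. expectation (\<lambda>x. (Z j x)\<^sup>2)) / (real n)\<^sup>2"
    by (simp add: cross if_distrib cong: if_cong)
  also have "\<dots> \<le> (\<Sum>j\<in>{1..n}. K\<^sup>2) / (real n)\<^sup>2"
  proof (intro divide_right_mono sum_mono)
    fix j
    have "expectation (\<lambda>x. (Z j x)\<^sup>2) \<le> expectation (\<lambda>x. K\<^sup>2)"
      using abs_prod[of j _ j]
      by (intro integral_mono) (auto simp: int_prod power2_eq_square abs_le_iff)
    then show "expectation (\<lambda>x. (Z j x)\<^sup>2) \<le> K\<^sup>2" by (simp add: prob_space)
  qed simp
  also have "\<dots> = K\<^sup>2 / real n" using \<open>1 \<le> n\<close> by (simp add: power2_eq_square)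
  finally show ?thesis .
qed

locale mixture_sample =
  fixes f :: "real \<Rightarrow> real" and M :: "'w measure" and X :: "nat \<Rightarrow> 'w \<Rightarrow> real"
    and p0 \<alpha>0 \<beta>0 :: real
  assumes f_meas[measurable]: "f \<in> borel_measurable borel"
    and f_nonneg: "\<And>x. 0 \<le> f x"
    and f_dens: "(\<integral>\<^sup>+ x. ennreal (f x) \<partial>lborel) = 1"
    and f_symm: "\<And>x. f (- x) = f x"
    and M_prob: "prob_space M"
    and X_distr: "\<And>i. distributed M lborel (X i)
                    (\<lambda>x. ennreal (p0 * f (x - \<alpha>0) + (1 - p0) * f (x - \<beta>0)))"
    and p0: "0 \<le> p0" "p0 \<le> 1"
begin

definition "g x = p0 * f (x - \<alpha>0) + (1 - p0) * f (x - \<beta>0)"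
definition "g_distr = density lborel (\<lambda>x. ennreal (g x))"
definition "f_distr = density lborel (\<lambda>x. ennreal (f x))"
definition "\<Phi> u = char f_distr u"

lemma g_measurable[measurable]: "g \<in> borel_measurable borel"
  unfolding g_def by measurable

lemma g_nonneg: "0 \<le> g x"
  using p0 f_nonneg[of "x - \<alpha>0"] f_nonneg[of "x - \<beta>0"] by (simp add: g_def)

lemma X_measurable[measurable]: "X i \<in> borel_measurable M"
  using X_distr[of i] unfolding distributed_def by (simp add: measurable_lborel2)

lemma distr_X: "distr M lborel (X i) = g_distr"
  using distributed_distr_eq_density[OF X_distr[of i]] by (simp add: g_distr_def g_def)

lemma sets_g_distr[measurable_cong, simp]: "sets g_distr = sets borel"
  by (simp add: g_distr_def)

lemma prob_space_g_distr: "prob_space g_distr"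
proof -
  have "prob_space (distr M lborel (X 0))"
    by (rule prob_space.prob_space_distr[OF M_prob]) simp
  then show ?thesis by (simp add: distr_X)
qed

lemma integrable_f: "integrable lborel f"
  by (rule integrableI_nn_integral_finite[where x=1]) (auto simp: f_dens f_nonneg)

lemma real_distribution_f_distr: "real_distribution f_distr"
proof -
  have "prob_space f_distr"
  proof
    show "emeasure f_distr (space f_distr) = 1"
      by (simp add: f_distr_def emeasure_density f_dens del: nn_integral_indicator_singleton)
  qed
  then show ?thesis
    unfolding real_distribution_def real_distribution_axioms_def by (simp add: f_distr_def)
qed

lemma Phi_eq_integral: "\<Phi> u = (\<integral>y. f y *\<^sub>R exp (\<i> * complex_of_real (u * y)) \<partial>lborel)"
  unfolding \<Phi>_def char_def f_distr_def
  by (subst integral_density) (auto simp: f_nonneg)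

lemma integral_shift_char:
  "(\<integral>x. f (x - a) *\<^sub>R exp (\<i> * complex_of_real (u * x)) \<partial>lborel)
     = exp (\<i> * complex_of_real (u * a)) * \<Phi> u"
proof -
  have "(\<integral>x. f (x - a) *\<^sub>R exp (\<i> * complex_of_real (u * x)) \<partial>lborel)
     = \<bar>1\<bar> *\<^sub>R (\<integral>y. f ((a + 1 * y) - a) *\<^sub>R exp (\<i> * complex_of_real (u * (a + 1 * y))) \<partial>lborel)"
    by (rule lborel_integral_real_affine) simp
  also have "\<dots> = (\<integral>y. exp (\<i> * complex_of_real (u * a)) * (f y *\<^sub>R exp (\<i> * complex_of_real (u * y))) \<partial>lborel)"
    unfolding abs_one scaleR_one
    by (intro Bochner_Integration.integral_cong refl) (simp add: algebra_simps exp_add[symmetric])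
  also have "\<dots> = exp (\<i> * complex_of_real (u * a)) * \<Phi> u"
    unfolding Phi_eq_integral by (rule integral_mult_right_zero)
  finally show ?thesis .
qed

lemma integrable_shift_char:
  "integrable lborel (\<lambda>x. f (x - a) *\<^sub>R exp (\<i> * complex_of_real (u * x)))"
proof -
  have "integrable lborel (\<lambda>x. f (-a + 1 * x))"
    by (rule lborel_integrable_real_affine[OF integrable_f]) simp
  then have fi: "integrable lborel (\<lambda>x. f (x - a))" by simp
  show ?thesis
    by (rule Bochner_Integration.integrable_bound[OF fi]) (auto simp: norm_mult f_nonneg)
qed

lemma char_g_distr: "char g_distr u = Mchar (p0, \<alpha>0, \<beta>0) u * \<Phi> u"
proof -
  have "char g_distr u = (\<integral>x. g x *\<^sub>R exp (\<i> * complex_of_real (u * x)) \<partial>lborel)"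
    unfolding char_def g_distr_def by (subst integral_density) (auto simp: g_nonneg)
  also have "\<dots> = (\<integral>x. p0 *\<^sub>R (f (x - \<alpha>0) *\<^sub>R exp (\<i> * complex_of_real (u * x)))
                    + (1 - p0) *\<^sub>R (f (x - \<beta>0) *\<^sub>R exp (\<i> * complex_of_real (u * x))) \<partial>lborel)"
    by (intro Bochner_Integration.integral_cong refl) (simp add: g_def scaleR_add_left)
  also have "\<dots> = p0 *\<^sub>R (\<integral>x. f (x - \<alpha>0) *\<^sub>R exp (\<i> * complex_of_real (u * x)) \<partial>lborel)
                 + (1 - p0) *\<^sub>R (\<integral>x. f (x - \<beta>0) *\<^sub>R exp (\<i> * complex_of_real (u * x)) \<partial>lborel)"
  proof -
    have i1: "integrable lborel (\<lambda>x. p0 *\<^sub>R (f (x - \<alpha>0) *\<^sub>R exp (\<i> * complex_of_real (u * x))))"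
      by (rule integrable_scaleR_right[OF integrable_shift_char])
    have i2: "integrable lborel (\<lambda>x. (1 - p0) *\<^sub>R (f (x - \<beta>0) *\<^sub>R exp (\<i> * complex_of_real (u * x))))"
      by (rule integrable_scaleR_right[OF integrable_shift_char])
    show ?thesis by (simp only: Bochner_Integration.integral_add[OF i1 i2] integral_scaleR_right)
  qed
  also have "\<dots> = Mchar (p0, \<alpha>0, \<beta>0) u * \<Phi> u"
    unfolding integral_shift_char by (simp add: Mchar_def scaleR_conv_of_real algebra_simps)
  finally show ?thesis .
qed

lemma Im_Phi: "Im (\<Phi> u) = 0"
proof -
  have "\<Phi> (- u) = \<bar>-1\<bar> *\<^sub>R (\<integral>y. f (0 + -1 * y) *\<^sub>R exp (\<i> * complex_of_real (- u * (0 + -1 * y))) \<partial>lborel)"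
    unfolding Phi_eq_integral by (rule lborel_integral_real_affine) simp
  also have "\<dots> = \<Phi> u" by (simp add: Phi_eq_integral f_symm)
  finally have 1: "\<Phi> (- u) = \<Phi> u" .
  have "\<Phi> (- u) = (\<integral>y. cnj (f y *\<^sub>R exp (\<i> * complex_of_real (u * y))) \<partial>lborel)"
    unfolding Phi_eq_integral
    by (intro Bochner_Integration.integral_cong refl) (simp add: exp_cnj scaleR_conv_of_real)
  also have "\<dots> = cnj (\<Phi> u)" unfolding Phi_eq_integral by (rule Bochner_Integration.integral_cnj)
  finally have "cnj (\<Phi> u) = \<Phi> u" using 1 by simp
  then show ?thesis by (simp add: complex_eq_iff)
qed

lemma isCont_Phi: "isCont \<Phi> u"
  unfolding \<Phi>_def using real_distribution.isCont_char[OF real_distribution_f_distr] .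

lemma Phi_zero: "\<Phi> 0 = 1"
  unfolding \<Phi>_def using real_distribution.char_zero[OF real_distribution_f_distr] .

definition \<mu> :: "real \<times> real \<times> real \<Rightarrow> real \<Rightarrow> real" where
  "\<mu> \<theta> u = Re (\<Phi> u) * Im (Mchar (p0, \<alpha>0, \<beta>0) u * cnj (Mchar \<theta> u)) / (cmod (Mchar \<theta> u))\<^sup>2"

lemma integral_Yim_X: "(\<integral>\<omega>. Yim \<theta> u (X j \<omega>) \<partial>M) = \<mu> \<theta> u"
proof -
  have "(\<integral>\<omega>. Yim \<theta> u (X j \<omega>) \<partial>M) = (\<integral>x. Yim \<theta> u x \<partial>g_distr)"
    by (simp add: distr_X[of j, symmetric] integral_distr)
  also have "\<dots> = Im (\<integral>x. exp (\<i> * complex_of_real (u * x)) / Mchar \<theta> u \<partial>g_distr)"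
  proof -
    have "integrable g_distr (\<lambda>x. exp (\<i> * complex_of_real (u * x)) / Mchar \<theta> u)"
      by (intro finite_measure.integrable_const_bound[OF prob_space.finite_measure[OF prob_space_g_distr],
            where B = "1 / cmod (Mchar \<theta> u)"]) (auto simp: norm_divide)
    then show ?thesis unfolding Yim_def by (rule integral_Im)
  qed
  also have "\<dots> = Im (char g_distr u / Mchar \<theta> u)"
    by (simp add: char_def)
  also have "\<dots> = \<mu> \<theta> u"
  proof -
    have R: "\<Phi> u = complex_of_real (Re (\<Phi> u))" using Im_Phi[of u] by (simp add: complex_eq_iff)
    have "char g_distr u / Mchar \<theta> u = (Mchar (p0, \<alpha>0, \<beta>0) u * \<Phi> u * cnj (Mchar \<theta> u)) / complex_of_real ((cmod (Mchar \<theta> u))\<^sup>2)"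
      unfolding char_g_distr by (subst complex_div_cnj) simp
    also have "\<dots> = complex_of_real (Re (\<Phi> u)) * (Mchar (p0, \<alpha>0, \<beta>0) u * cnj (Mchar \<theta> u)) / complex_of_real ((cmod (Mchar \<theta> u))\<^sup>2)"
      by (subst R) (simp only: mult_ac)
    finally show ?thesis
      unfolding \<mu>_def by (simp only: Im_divide_of_real) simp
  qed
  finally show ?thesis .
qed

end

locale mixture_contrast = mixture_sample f M X p0 \<alpha>0 \<beta>0
  for f :: "real \<Rightarrow> real" and M :: "'w measure" and X :: "nat \<Rightarrow> 'w \<Rightarrow> real"
    and p0 \<alpha>0 \<beta>0 :: real +
  fixes \<Theta> :: "(real \<times> real \<times> real) set" and W :: "real measure"
  assumes Theta_compact: "compact \<Theta>"
    and Theta_sub: "\<Theta> \<subseteq> {(p, a, b). 0 < p \<and> p < 1/2 \<and> a \<noteq> b}"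
    and theta0: "(p0, \<alpha>0, \<beta>0) \<in> \<Theta>"
    and W_prob: "prob_space W"
    and W_sets[measurable_cong]: "sets W = sets borel"
    and W_support: "\<And>U. open U \<Longrightarrow> U \<noteq> {} \<Longrightarrow> emeasure W U > 0"
    and W_moment: "integrable W (\<lambda>u. 1 + \<bar>u\<bar> + u\<^sup>2 + \<bar>u\<bar> ^ 3)"
    and X_indep: "prob_space.indep_vars M (\<lambda>_. borel) X UNIV"
begin

lemma Theta_fst: "\<theta> \<in> \<Theta> \<Longrightarrow> 0 < fst \<theta> \<and> fst \<theta> < 1/2"
  using Theta_sub by auto

definition "c = 1 - 2 * Sup (fst ` \<Theta>)"
definition "B = 1 / c"
definition "poly_weight u = 1 + \<bar>u\<bar> + u\<^sup>2 + \<bar>u\<bar> ^ 3" for u :: real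
definition "poly_moment = (\<integral>u. poly_weight u \<partial>W)"

lemma Sup_fst_Theta: "Sup (fst ` \<Theta>) < 1/2" "\<theta> \<in> \<Theta> \<Longrightarrow> fst \<theta> \<le> Sup (fst ` \<Theta>)"
proof -
  have "compact (fst ` \<Theta>)"
    by (rule compact_continuous_image[OF continuous_on_fst[OF continuous_on_id] Theta_compact])
  moreover have "fst ` \<Theta> \<noteq> {}" using theta0 by auto
  ultimately obtain s where s: "s \<in> fst ` \<Theta>" "\<forall>t\<in>fst ` \<Theta>. t \<le> s"
    using compact_attains_sup by blast
  then have "Sup (fst ` \<Theta>) = s" by (intro cSup_eq_maximum) auto
  with s Theta_fst show "Sup (fst ` \<Theta>) < 1/2" "\<theta> \<in> \<Theta> \<Longrightarrow> fst \<theta> \<le> Sup (fst ` \<Theta>)"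
    by auto
qed

lemma c_pos: "0 < c" using Sup_fst_Theta(1) by (simp add: c_def)
lemma B_pos: "0 < B" using c_pos by (simp add: B_def)

lemma norm_Mchar_ge_c: "\<theta> \<in> \<Theta> \<Longrightarrow> c \<le> cmod (Mchar \<theta> u)"
proof -
  assume th: "\<theta> \<in> \<Theta>"
  obtain p a b where \<theta>: "\<theta> = (p, a, b)" by (cases \<theta>)
  have "0 < p" "p \<le> Sup (fst ` \<Theta>)" using Theta_fst[OF th] Sup_fst_Theta(2)[OF th] by (auto simp: \<theta>)
  moreover have "p < 1/2" using Theta_fst[OF th] by (simp add: \<theta>)
  ultimately have "c \<le> 1 - 2 * p" "1 - 2 * p \<le> cmod (Mchar (p, a, b) u)"
    by (auto simp: c_def intro: norm_Mchar_ge)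
  then show ?thesis by (simp add: \<theta>)
qed

lemma abs_Yim_le_B: "\<theta> \<in> \<Theta> \<Longrightarrow> \<bar>Yim \<theta> u x\<bar> \<le> B"
  unfolding B_def by (rule abs_Yim_le[OF c_pos norm_Mchar_ge_c])

lemma Yim_lipschitz: "\<theta> \<in> \<Theta> \<Longrightarrow> \<theta>' \<in> \<Theta> \<Longrightarrow> \<bar>Yim \<theta> u x - Yim \<theta>' u x\<bar> \<le> (2 + 2*\<bar>u\<bar>) * dist \<theta> \<theta>' / c^2"
proof -
  assume th: "\<theta> \<in> \<Theta>" and th': "\<theta>' \<in> \<Theta>"
  obtain p a b where \<theta>: "\<theta> = (p,a,b)" by (cases \<theta>)
  obtain p' a' b' where \<theta>': "\<theta>' = (p',a',b')" by (cases \<theta>')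
  have p': "0 \<le> p'" "p' \<le> 1" using Theta_fst[OF th'] by (auto simp: \<theta>')
  show ?thesis
    by (rule abs_Yim_diff_le[OF c_pos norm_Mchar_ge_c[OF th] norm_Mchar_ge_c[OF th']])
      (use norm_Mchar_diff_le[OF p', of p a b u a' b'] in \<open>simp add: \<theta> \<theta>'\<close>)
qed

lemma M_finite: "finite_measure M"
  using M_prob by (simp add: prob_space_def)

lemma integrable_Yim_X: "\<theta> \<in> \<Theta> \<Longrightarrow> integrable M (\<lambda>\<omega>. Yim \<theta> u (X j \<omega>))"
  by (rule finite_measure.integrable_const_bound[OF M_finite, where B=B]) (auto simp: abs_Yim_le_B)

lemma abs_mu_le: "\<theta> \<in> \<Theta> \<Longrightarrow> \<bar>\<mu> \<theta> u\<bar> \<le> B"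
  unfolding integral_Yim_X[symmetric, of _ _ 0] by (rule prob_space.abs_integral_le_const[OF M_prob]) (auto simp: abs_Yim_le_B)

lemma mu_lipschitz: "\<theta> \<in> \<Theta> \<Longrightarrow> \<theta>' \<in> \<Theta> \<Longrightarrow> \<bar>\<mu> \<theta> u - \<mu> \<theta>' u\<bar> \<le> (2 + 2*\<bar>u\<bar>) * dist \<theta> \<theta>' / c^2"
proof -
  assume th: "\<theta> \<in> \<Theta>" and th': "\<theta>' \<in> \<Theta>"
  have "\<mu> \<theta> u - \<mu> \<theta>' u = (\<integral>\<omega>. Yim \<theta> u (X 0 \<omega>) - Yim \<theta>' u (X 0 \<omega>) \<partial>M)"
    unfolding integral_Yim_X[symmetric, of _ _ 0]
    by (rule Bochner_Integration.integral_diff[symmetric, OF integrable_Yim_X[OF th] integrable_Yim_X[OF th']])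
  also have "\<bar>\<dots>\<bar> \<le> (2 + 2*\<bar>u\<bar>) * dist \<theta> \<theta>' / c^2"
    by (rule prob_space.abs_integral_le_const[OF M_prob]) (auto intro: Yim_lipschitz[OF th th'])
  finally show ?thesis .
qed

lemma Phi_measurable[measurable]: "\<Phi> \<in> borel_measurable borel"
  unfolding \<Phi>_def by (rule real_distribution.char_measurable[OF real_distribution_f_distr])

lemma cnj_measurable[measurable]: "cnj \<in> borel_measurable borel"
  by (intro borel_measurable_continuous_onI continuous_on_cnj continuous_on_id)

lemma cmod_measurable[measurable]: "cmod \<in> borel_measurable borel"
  by (intro borel_measurable_continuous_onI continuous_on_norm continuous_on_id)

lemma mu_measurable[measurable]: "\<mu> \<theta> \<in> borel_measurable borel"
  unfolding \<mu>_def[abs_def] by measurable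

lemma isCont_mu: "\<theta> \<in> \<Theta> \<Longrightarrow> isCont (\<mu> \<theta>) u"
proof -
  assume th: "\<theta> \<in> \<Theta>"
  have nz: "cmod (Mchar \<theta> u) \<noteq> 0" using norm_Mchar_ge_c[OF th, of u] c_pos by auto
  have c1: "isCont (\<lambda>x. Re (\<Phi> x)) u" by (rule continuous_Re[OF isCont_Phi])
  have c3: "isCont (\<lambda>x. Im (Mchar (p0, \<alpha>0, \<beta>0) x * cnj (Mchar \<theta> x))) u"
    by (intro continuous_Im continuous_mult continuous_cnj isCont_Mchar)
  have c4: "isCont (\<lambda>x. (cmod (Mchar \<theta> x))\<^sup>2) u"
    by (intro continuous_power continuous_norm isCont_Mchar)
  show ?thesis unfolding \<mu>_def[abs_def]
    by (intro isCont_divide isCont_mult c1 c3 c4) (use nz in auto)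
qed

lemma W_finite: "finite_measure W" using W_prob by (simp add: prob_space_def)

lemma integrable_poly_weight: "integrable W poly_weight"
  using W_moment by (simp add: poly_weight_def[abs_def])

lemma poly_weight_ge:
  "1 \<le> poly_weight u" "\<bar>u\<bar> \<le> poly_weight u" "1 + \<bar>u\<bar> \<le> poly_weight u" "(1 + \<bar>u\<bar>)^2 \<le> 2 * poly_weight u"
proof -
  show "1 + \<bar>u\<bar> \<le> poly_weight u" by (simp add: poly_weight_def)
  show "1 \<le> poly_weight u" by (simp add: poly_weight_def)
  show "\<bar>u\<bar> \<le> poly_weight u" by (simp add: poly_weight_def)
  have "(1 + \<bar>u\<bar>)^2 = 1 + 2*\<bar>u\<bar> + u^2" by (simp add: power2_eq_square algebra_simps)
  also have "\<dots> \<le> 2 * poly_weight u" by (simp add: poly_weight_def)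
  finally show "(1 + \<bar>u\<bar>)^2 \<le> 2 * poly_weight u" .
qed

lemma poly_moment_ge: "1 \<le> poly_moment"
proof -
  have "(\<integral>u. 1 \<partial>W) \<le> poly_moment" unfolding poly_moment_def
    by (rule integral_mono[OF finite_measure.integrable_const[OF W_finite] integrable_poly_weight])
      (simp add: poly_weight_ge)
  then show ?thesis using W_prob by (simp add: prob_space.prob_space)
qed

definition "S \<theta> = (\<integral>u. (\<mu> \<theta> u)\<^sup>2 \<partial>W)"

lemma integrable_mu_square: "\<theta> \<in> \<Theta> \<Longrightarrow> integrable W (\<lambda>u. (\<mu> \<theta> u)\<^sup>2)"
proof (rule finite_measure.integrable_const_bound[OF W_finite, where B="B^2"])
  assume th: "\<theta> \<in> \<Theta>"
  show "AE x in W. norm ((\<mu> \<theta> x)\<^sup>2) \<le> B\<^sup>2"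
  proof (intro AE_I2)
    fix x
    have "\<bar>\<mu> \<theta> x\<bar>^2 \<le> B^2" by (rule power_mono[OF abs_mu_le[OF th, of x] abs_ge_zero])
    then show "norm ((\<mu> \<theta> x)\<^sup>2) \<le> B\<^sup>2" by simp
  qed
qed simp

lemma S_nonneg: "0 \<le> S \<theta>"
  unfolding S_def by simp

lemma S_theta0: "S (p0, \<alpha>0, \<beta>0) = 0"
proof -
  have "\<mu> (p0, \<alpha>0, \<beta>0) u = 0" for u
  proof -
    have "Im (Mchar (p0, \<alpha>0, \<beta>0) u * cnj (Mchar (p0, \<alpha>0, \<beta>0) u)) = 0"
      by (simp add: complex_mult_cnj)
    then show ?thesis by (simp add: \<mu>_def)
  qed
  then show ?thesis by (simp add: S_def)
qed

lemma S_lipschitz: "\<theta> \<in> \<Theta> \<Longrightarrow> \<theta>' \<in> \<Theta> \<Longrightarrow> \<bar>S \<theta> - S \<theta>'\<bar> \<le> 4 * B * poly_moment / c^2 * dist \<theta> \<theta>'"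
proof -
  assume th: "\<theta> \<in> \<Theta>" and th': "\<theta>' \<in> \<Theta>"
  have pt: "\<bar>(\<mu> \<theta> u)\<^sup>2 - (\<mu> \<theta>' u)\<^sup>2\<bar> \<le> 4 * B / c^2 * dist \<theta> \<theta>' * poly_weight u" for u
  proof -
    have "\<bar>(\<mu> \<theta> u)\<^sup>2 - (\<mu> \<theta>' u)\<^sup>2\<bar> = \<bar>\<mu> \<theta> u + \<mu> \<theta>' u\<bar> * \<bar>\<mu> \<theta> u - \<mu> \<theta>' u\<bar>"
      by (simp add: power2_eq_square abs_mult[symmetric] algebra_simps)
    also have "\<dots> \<le> (2*B) * ((2 + 2*\<bar>u\<bar>) * dist \<theta> \<theta>' / c^2)"
      using abs_mu_le[OF th, of u] abs_mu_le[OF th', of u]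
      by (intro mult_mono mu_lipschitz[OF th th']) auto
    also have "\<dots> \<le> (2*B) * ((2 * poly_weight u) * dist \<theta> \<theta>' / c^2)"
      using poly_weight_ge[of u] B_pos c_pos
      by (intro mult_left_mono divide_right_mono mult_right_mono) auto
    also have "\<dots> = 4 * B / c^2 * dist \<theta> \<theta>' * poly_weight u" by (simp add: field_simps)
    finally show ?thesis .
  qed
  have "\<bar>S \<theta> - S \<theta>'\<bar> = \<bar>\<integral>u. (\<mu> \<theta> u)\<^sup>2 - (\<mu> \<theta>' u)\<^sup>2 \<partial>W\<bar>"
    unfolding S_def
    by (subst Bochner_Integration.integral_diff[OF integrable_mu_square[OF th] integrable_mu_square[OF th']])
      simp
  also have "\<dots> \<le> (\<integral>u. \<bar>(\<mu> \<theta> u)\<^sup>2 - (\<mu> \<theta>' u)\<^sup>2\<bar> \<partial>W)" by (rule integral_abs_bound)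
  also have "\<dots> \<le> (\<integral>u. 4 * B / c^2 * dist \<theta> \<theta>' * poly_weight u \<partial>W)"
    by (rule integral_mono[OF _ _ pt])
      (auto intro!: integrable_poly_weight Bochner_Integration.integrable_diff integrable_mu_square th th')
  also have "\<dots> = 4 * B * poly_moment / c^2 * dist \<theta> \<theta>'" by (simp add: poly_moment_def)
  finally show ?thesis .
qed

lemma space_W: "space W = UNIV"
  using sets_eq_imp_space_eq[OF W_sets] by simp

lemma mu_eq_zero_if_S_eq_zero:
  assumes th: "\<theta> \<in> \<Theta>" and S0: "S \<theta> = 0"
  shows "\<mu> \<theta> u0 = 0"
proof (rule ccontr)
  assume nz: "\<mu> \<theta> u0 \<noteq> 0"
  define v where "v = (\<mu> \<theta> u0)\<^sup>2 / 2"
  have v: "0 < v" using nz by (simp add: v_def)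
  define U where "U = {u. (\<lambda>_. v) u < (\<lambda>u. (\<mu> \<theta> u)\<^sup>2) u}"
  have cont: "continuous_on UNIV (\<lambda>u. (\<mu> \<theta> u)\<^sup>2)"
    by (intro continuous_at_imp_continuous_on ballI continuous_power isCont_mu th)
  have oU: "open U" unfolding U_def by (rule open_Collect_less[OF continuous_on_const cont])
  have "u0 \<in> U" using v nz by (simp add: U_def v_def)
  then have "emeasure W U > 0" using W_support[OF oU] by auto
  moreover have UW: "U \<in> sets W" using oU W_sets by simp
  moreover have "emeasure W U = ennreal (measure W U)" by (rule finite_measure.emeasure_eq_measure[OF W_finite])
  ultimately have mpos: "measure W U > 0" by simp
  have "(\<integral>u. v * indicator U u \<partial>W) \<le> S \<theta>"
    unfolding S_def
  proof (rule integral_mono)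
    have "emeasure W U < \<infinity>" using finite_measure.emeasure_finite[OF W_finite] by (simp add: less_top)
    then show "integrable W (\<lambda>u. v * indicator U u)"
      by (intro integrable_mult_right integrable_real_indicator UW)
    show "integrable W (\<lambda>u. (\<mu> \<theta> u)\<^sup>2)" by (rule integrable_mu_square[OF th])
    show "v * indicator U u \<le> (\<mu> \<theta> u)\<^sup>2" for u
      using v by (cases "u \<in> U") (auto simp: U_def)
  qed
  moreover have "(\<integral>u. v * indicator U u \<partial>W) = v * measure W U"
    by (simp add: space_W)
  moreover have "v * measure W U > 0" using v mpos by (rule mult_pos_pos)
  ultimately show False using S0 by linarith
qed

lemma S_pos:
  assumes th: "\<theta> \<in> \<Theta>" and ne: "\<theta> \<noteq> (p0, \<alpha>0, \<beta>0)"
  shows "S \<theta> > 0"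
proof (rule ccontr)
  assume "\<not> S \<theta> > 0"
  then have S0: "S \<theta> = 0" using S_nonneg[of \<theta>] by simp
  have ReC: "isCont (\<lambda>x. Re (\<Phi> x)) 0" by (rule continuous_Re[OF isCont_Phi])
  obtain \<delta> where \<delta>: "\<delta> > 0" "\<And>x. dist x 0 < \<delta> \<Longrightarrow> dist (Re (\<Phi> x)) (Re (\<Phi> 0)) < 1/2"
    using ReC[unfolded continuous_at_eps_delta, rule_format, of "1/2"] by auto
  obtain p a b where \<theta>: "\<theta> = (p,a,b)" by (cases \<theta>)
  have pab: "0 < p" "p < 1/2" "a \<noteq> b" using th Theta_sub by (auto simp: \<theta>)
  have pab0: "0 < p0" "p0 < 1/2" "\<alpha>0 \<noteq> \<beta>0" using theta0 Theta_sub by auto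
  have "Im (Mchar (p0, \<alpha>0, \<beta>0) u * cnj (Mchar (p,a,b) u)) = 0" if u: "\<bar>u\<bar> < \<delta>" for u
  proof -
    have "dist (Re (\<Phi> u)) 1 < 1/2" using \<delta>(2)[of u] u Phi_zero by (simp add: dist_real_def)
    then have R: "Re (\<Phi> u) \<noteq> 0" by (auto simp: dist_real_def)
    have nz: "cmod (Mchar \<theta> u) \<noteq> 0" using norm_Mchar_ge_c[OF th, of u] c_pos by auto
    have "\<mu> \<theta> u = 0" by (rule mu_eq_zero_if_S_eq_zero[OF th S0])
    then show ?thesis using R nz by (simp add: \<mu>_def \<theta>)
  qed
  from Mchar_identifiable_near_zero[OF pab(1,2) pab0(1,2) pab(3) pab0(3) \<delta>(1) this] ne \<theta> show False by simp
qed

lemma indep_var_X_pair: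
  assumes jk: "j \<noteq> k" and [measurable]: "\<phi> \<in> borel_measurable borel" "\<psi> \<in> borel_measurable borel"
  shows "prob_space.indep_var M borel (\<lambda>\<omega>. \<phi> (X j \<omega>)) borel (\<lambda>\<omega>. \<psi> (X k \<omega>))"
proof -
  have "prob_space.indep_var M (PiM {j} (\<lambda>_. borel)) (\<lambda>\<omega>. restrict (\<lambda>i. X i \<omega>) {j})
                               (PiM {k} (\<lambda>_. borel)) (\<lambda>\<omega>. restrict (\<lambda>i. X i \<omega>) {k})"
    by (rule prob_space.indep_var_restrict[OF M_prob X_indep]) (use jk in auto)
  then have "prob_space.indep_var M borel ((\<lambda>x. \<phi> (x j)) \<circ> (\<lambda>\<omega>. restrict (\<lambda>i. X i \<omega>) {j}))
                               borel ((\<lambda>x. \<psi> (x k)) \<circ> (\<lambda>\<omega>. restrict (\<lambda>i. X i \<omega>) {k}))"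
  proof (rule prob_space.indep_var_compose[OF M_prob])
    show "(\<lambda>x. \<phi> (x j)) \<in> Pi\<^sub>M {j} (\<lambda>_. borel) \<rightarrow>\<^sub>M borel"
      by (rule measurable_compose[OF measurable_component_singleton]) auto
    show "(\<lambda>x. \<psi> (x k)) \<in> Pi\<^sub>M {k} (\<lambda>_. borel) \<rightarrow>\<^sub>M borel"
      by (rule measurable_compose[OF measurable_component_singleton]) auto
  qed
  then show ?thesis by (simp add: comp_def)
qed

definition "Ybar n \<theta> u \<omega> = (\<Sum>j\<in>{1..n}. Yim \<theta> u (X j \<omega>)) / real n"
definition "sq_dev n \<theta> u \<omega> = (Ybar n \<theta> u \<omega> - \<mu> \<theta> u)\<^sup>2"
definition "int_sq_dev n \<theta> \<omega> = (\<integral>u. sq_dev n \<theta> u \<omega> \<partial>W)"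

lemma abs_Ybar_le:
  assumes "\<theta> \<in> \<Theta>"
  shows "\<bar>Ybar n \<theta> u \<omega>\<bar> \<le> B"
proof -
  have "\<bar>Ybar n \<theta> u \<omega>\<bar> \<le> (\<Sum>j\<in>{1..n}. \<bar>Yim \<theta> u (X j \<omega>)\<bar>) / real n"
    unfolding Ybar_def by (simp add: divide_right_mono sum_abs)
  also have "\<dots> \<le> (\<Sum>j\<in>{1..n}. B) / real n"
    by (intro divide_right_mono sum_mono abs_Yim_le_B assms) simp
  also have "\<dots> \<le> B" using B_pos by (cases "n = 0") simp_all
  finally show ?thesis .
qed

lemma sq_dev_bounds: "\<theta> \<in> \<Theta> \<Longrightarrow> 0 \<le> sq_dev n \<theta> u \<omega> \<and> sq_dev n \<theta> u \<omega> \<le> 4 * B\<^sup>2"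
proof -
  assume th: "\<theta> \<in> \<Theta>"
  have "\<bar>Ybar n \<theta> u \<omega> - \<mu> \<theta> u\<bar> \<le> 2 * B"
    using abs_Ybar_le[OF th, of n u \<omega>] abs_mu_le[OF th, of u] by linarith
  then have "\<bar>Ybar n \<theta> u \<omega> - \<mu> \<theta> u\<bar>^2 \<le> (2*B)^2" by (rule power_mono) simp
  then show ?thesis by (simp add: sq_dev_def power_mult_distrib)
qed

lemma sq_dev_measurable[measurable]: "(\<lambda>(u, \<omega>). sq_dev n \<theta> u \<omega>) \<in> borel_measurable (W \<Otimes>\<^sub>M M)"
  unfolding sq_dev_def Ybar_def by measurable

lemma sq_dev_measurable_W[measurable]: "(\<lambda>u. sq_dev n \<theta> u \<omega>) \<in> borel_measurable W"
  unfolding sq_dev_def Ybar_def by measurable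

lemma expectation_sq_dev_le:
  assumes "\<theta> \<in> \<Theta>" and "1 \<le> n"
  shows "(\<integral>\<omega>. sq_dev n \<theta> u \<omega> \<partial>M) \<le> 4 * B\<^sup>2 / real n"
proof -
  define Z where "Z j \<omega> = Yim \<theta> u (X j \<omega>) - \<mu> \<theta> u" for j \<omega>
  have "sq_dev n \<theta> u \<omega> = ((\<Sum>j\<in>{1..n}. Z j \<omega>) / real n)\<^sup>2" for \<omega>
    using \<open>1 \<le> n\<close> by (simp add: sq_dev_def Ybar_def Z_def sum_subtractf field_simps)
  moreover have "(\<integral>\<omega>. ((\<Sum>j\<in>{1..n}. Z j \<omega>) / real n)\<^sup>2 \<partial>M) \<le> (2 * B)\<^sup>2 / real n"
  proof (rule prob_space.expectation_square_mean_le[OF M_prob _ _ _ _ \<open>1 \<le> n\<close>])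
    show "Z j \<in> borel_measurable M" for j unfolding Z_def by measurable
    show "\<bar>Z j \<omega>\<bar> \<le> 2 * B" for j \<omega>
      using abs_Yim_le_B[OF \<open>\<theta> \<in> \<Theta>\<close>, of u "X j \<omega>"] abs_mu_le[OF \<open>\<theta> \<in> \<Theta>\<close>, of u]
      by (simp add: Z_def)
    show "(\<integral>\<omega>. Z j \<omega> \<partial>M) = 0" for j
      unfolding Z_def using M_prob
      by (simp add: Bochner_Integration.integral_diff[OF integrable_Yim_X[OF \<open>\<theta> \<in> \<Theta>\<close>]
          finite_measure.integrable_const[OF M_finite]] integral_Yim_X prob_space.prob_space)
    show "prob_space.indep_var M borel (Z j) borel (Z k)" if "j \<noteq> k" for j k
      using indep_var_X_pair[OF that, of "\<lambda>x. Yim \<theta> u x - \<mu> \<theta> u" "\<lambda>x. Yim \<theta> u x - \<mu> \<theta> u"]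
      by (simp add: Z_def[abs_def])
  qed
  ultimately show ?thesis by (simp add: power_mult_distrib)
qed

lemma pair_sigma_finite_W_M: "pair_sigma_finite W M"
  unfolding pair_sigma_finite_def
  using W_prob M_prob by (auto intro: prob_space_imp_sigma_finite)

lemma int_sq_dev_measurable[measurable]: "int_sq_dev n \<theta> \<in> borel_measurable M"
  unfolding int_sq_dev_def
  by (rule sigma_finite_measure.borel_measurable_lebesgue_integral[OF prob_space_imp_sigma_finite[OF W_prob]]) simp

lemma int_sq_dev_bounds: "\<theta> \<in> \<Theta> \<Longrightarrow> 0 \<le> int_sq_dev n \<theta> \<omega> \<and> int_sq_dev n \<theta> \<omega> \<le> 4 * B\<^sup>2"
proof -
  assume th: "\<theta> \<in> \<Theta>"
  have "\<bar>int_sq_dev n \<theta> \<omega>\<bar> \<le> 4 * B\<^sup>2" unfolding int_sq_dev_def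
    by (rule prob_space.abs_integral_le_const[OF W_prob]) (use sq_dev_bounds[OF th] in auto)
  moreover have "0 \<le> int_sq_dev n \<theta> \<omega>" unfolding int_sq_dev_def
    by (rule integral_nonneg_AE) (use sq_dev_bounds[OF th] in auto)
  ultimately show ?thesis by simp
qed

lemma integrable_int_sq_dev: "\<theta> \<in> \<Theta> \<Longrightarrow> integrable M (int_sq_dev n \<theta>)"
  by (rule finite_measure.integrable_const_bound[OF M_finite, where B="4*B\<^sup>2"]) (use int_sq_dev_bounds in auto)

lemma expectation_int_sq_dev_le: assumes th: "\<theta> \<in> \<Theta>" and n: "1 \<le> n"
  shows "(\<integral>\<omega>. int_sq_dev n \<theta> \<omega> \<partial>M) \<le> 4 * B\<^sup>2 / real n"
proof -
  have int: "integrable (W \<Otimes>\<^sub>M M) (\<lambda>(u, \<omega>). sq_dev n \<theta> u \<omega>)"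
  proof (rule finite_measure.integrable_const_bound[where B="4*B\<^sup>2"])
    show "finite_measure (W \<Otimes>\<^sub>M M)" by (rule finite_measure_pair_measure[OF M_finite W_finite])
    show "AE x in W \<Otimes>\<^sub>M M. norm (case x of (u, \<omega>) \<Rightarrow> sq_dev n \<theta> u \<omega>) \<le> 4 * B\<^sup>2"
      using sq_dev_bounds[OF th] by (auto split: prod.split)
  qed simp
  have "(\<integral>\<omega>. int_sq_dev n \<theta> \<omega> \<partial>M) = (\<integral>u. (\<integral>\<omega>. sq_dev n \<theta> u \<omega> \<partial>M) \<partial>W)"
    unfolding int_sq_dev_def by (rule pair_sigma_finite.Fubini_integral[OF pair_sigma_finite_W_M int])
  also have "\<dots> \<le> 4 * B\<^sup>2 / real n"
  proof -
    have "\<bar>\<integral>u. (\<integral>\<omega>. sq_dev n \<theta> u \<omega> \<partial>M) \<partial>W\<bar> \<le> 4 * B\<^sup>2 / real n"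
    proof (rule prob_space.abs_integral_le_const[OF W_prob])
      show "(\<lambda>u. \<integral>\<omega>. sq_dev n \<theta> u \<omega> \<partial>M) \<in> borel_measurable W"
        by (rule sigma_finite_measure.borel_measurable_lebesgue_integral
            [OF prob_space_imp_sigma_finite[OF M_prob]]) simp
      fix u
      have "0 \<le> (\<integral>\<omega>. sq_dev n \<theta> u \<omega> \<partial>M)" by (rule integral_nonneg_AE) (use sq_dev_bounds[OF th] in auto)
      then show "\<bar>\<integral>\<omega>. sq_dev n \<theta> u \<omega> \<partial>M\<bar> \<le> 4 * B\<^sup>2 / real n" using expectation_sq_dev_le[OF th n, of u] by simp
    qed
    then show ?thesis by simp
  qed
  finally show ?thesis .
qed

lemma Ybar_lipschitz:
  assumes "\<theta> \<in> \<Theta>" "\<theta>' \<in> \<Theta>"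
  shows "\<bar>Ybar n \<theta> u \<omega> - Ybar n \<theta>' u \<omega>\<bar> \<le> (2 + 2 * \<bar>u\<bar>) * dist \<theta> \<theta>' / c^2"
proof -
  let ?L = "(2 + 2 * \<bar>u\<bar>) * dist \<theta> \<theta>' / c^2"
  have "\<bar>Ybar n \<theta> u \<omega> - Ybar n \<theta>' u \<omega>\<bar>
      \<le> (\<Sum>j\<in>{1..n}. \<bar>Yim \<theta> u (X j \<omega>) - Yim \<theta>' u (X j \<omega>)\<bar>) / real n"
    unfolding Ybar_def
    by (simp add: divide_right_mono sum_abs flip: diff_divide_distrib sum_subtractf)
  also have "\<dots> \<le> (\<Sum>j\<in>{1..n}. ?L) / real n"
    by (intro divide_right_mono sum_mono Yim_lipschitz assms) simp
  also have "\<dots> \<le> ?L" using c_pos by (cases "n = 0") simp_all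
  finally show ?thesis .
qed

lemma sq_dev_transfer:
  assumes th: "\<theta> \<in> \<Theta>" and th': "\<theta>' \<in> \<Theta>" and r: "dist \<theta> \<theta>' \<le> r"
  shows "(Ybar n \<theta> u \<omega> - \<mu> \<theta> u)\<^sup>2 \<le> 2 * sq_dev n \<theta>' u \<omega> + 64 * r\<^sup>2 * poly_weight u / c^4"
proof -
  define L where "L = (2 + 2*\<bar>u\<bar>) * r / c^2"
  have dL: "(2 + 2*\<bar>u\<bar>) * dist \<theta> \<theta>' / c^2 \<le> L"
    unfolding L_def using r c_pos by (intro divide_right_mono mult_left_mono) auto
  have D: "\<bar>(Ybar n \<theta> u \<omega> - \<mu> \<theta> u) - (Ybar n \<theta>' u \<omega> - \<mu> \<theta>' u)\<bar> \<le> 2 * L"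
    using Ybar_lipschitz[OF th th', of n u \<omega>] mu_lipschitz[OF th th', of u] dL by linarith
  have D2: "((Ybar n \<theta> u \<omega> - \<mu> \<theta> u) - (Ybar n \<theta>' u \<omega> - \<mu> \<theta>' u))\<^sup>2 \<le> (2 * L)\<^sup>2"
    using power_mono[OF D abs_ge_zero, of 2] by simp
  have "2 * L = 4 * ((1 + \<bar>u\<bar>) * r / c^2)" by (simp add: L_def algebra_simps)
  then have "(2 * L)\<^sup>2 = 16 * ((1 + \<bar>u\<bar>)\<^sup>2 * r\<^sup>2 / c^4)"
    by (simp only: power_divide power_mult_distrib) (simp flip: power_mult)
  also have "\<dots> \<le> 16 * ((2 * poly_weight u) * r\<^sup>2 / c^4)"
    using poly_weight_ge(4)[of u] c_pos by (intro divide_right_mono mult_right_mono mult_left_mono) auto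
  finally have "(2 * L)\<^sup>2 \<le> 32 * r\<^sup>2 * poly_weight u / c^4" by (simp add: mult_ac)
  with D2 power2_le_sum_power2_diff[of "Ybar n \<theta> u \<omega> - \<mu> \<theta> u" "Ybar n \<theta>' u \<omega> - \<mu> \<theta>' u"]
  show ?thesis by (simp add: sq_dev_def)
qed

lemma integrable_sq_dev: "\<theta> \<in> \<Theta> \<Longrightarrow> integrable W (\<lambda>u. sq_dev n \<theta> u \<omega>)"
  by (rule finite_measure.integrable_const_bound[OF W_finite, where B="4*B\<^sup>2"]) (use sq_dev_bounds in auto)

lemma Y_offdiag_measurable[measurable]: "Y_offdiag X n \<theta> \<omega> \<in> borel_measurable W"
  unfolding Y_offdiag_def[abs_def] by measurable

lemma Sn_integrand_deviation:
  assumes th: "\<theta> \<in> \<Theta>" "\<theta>' \<in> \<Theta>" "dist \<theta> \<theta>' \<le> r" and "2 \<le> n" "0 < \<eta>" "0 < hn"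
  shows "\<bar>indicator {u. \<bar>u\<bar> \<le> 1 / hn} u * Y_offdiag X n \<theta> \<omega> u / (real n * (real n - 1)) - (\<mu> \<theta> u)\<^sup>2\<bar>
    \<le> 2 * B\<^sup>2 / (real n - 1) + \<eta> + B\<^sup>2 / \<eta> * (2 * sq_dev n \<theta>' u \<omega> + 64 * r\<^sup>2 / c^4 * poly_weight u)
       + B\<^sup>2 * hn * poly_weight u"
proof -
  let ?y = "Ybar n \<theta> u \<omega>" and ?s = "\<Sum>j\<in>{1..n}. (Yim \<theta> u (X j \<omega>))\<^sup>2"
  have transfer: "(?y - \<mu> \<theta> u)\<^sup>2 \<le> 2 * sq_dev n \<theta>' u \<omega> + 64 * r\<^sup>2 / c^4 * poly_weight u"
    using sq_dev_transfer[OF th] by simp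
  have nonneg: "0 \<le> 2 * B\<^sup>2 / (real n - 1)" "0 \<le> B\<^sup>2 * hn * poly_weight u"
      "0 \<le> B\<^sup>2 / \<eta> * (2 * sq_dev n \<theta>' u \<omega> + 64 * r\<^sup>2 / c^4 * poly_weight u)"
  proof -
    show "0 \<le> 2 * B\<^sup>2 / (real n - 1)" using \<open>2 \<le> n\<close> by simp
    show "0 \<le> B\<^sup>2 * hn * poly_weight u" using \<open>0 < hn\<close> poly_weight_ge(1)[of u] by simp
    show "0 \<le> B\<^sup>2 / \<eta> * (2 * sq_dev n \<theta>' u \<omega> + 64 * r\<^sup>2 / c^4 * poly_weight u)"
      using \<open>0 < \<eta>\<close> sq_dev_bounds[OF th(2), of n u \<omega>] poly_weight_ge(1)[of u]
      by (intro mult_nonneg_nonneg add_nonneg_nonneg) auto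
  qed
  show ?thesis
  proof (cases "\<bar>u\<bar> \<le> 1 / hn")
    case True
    have "Y_offdiag X n \<theta> \<omega> u = (real n)\<^sup>2 * ?y\<^sup>2 - ?s"
      using \<open>2 \<le> n\<close> by (simp add: Y_offdiag_def Ybar_def power_divide)
    moreover have "(Yim \<theta> u (X j \<omega>))\<^sup>2 \<le> B\<^sup>2" for j
      using power_mono[OF abs_Yim_le_B[OF th(1), of u "X j \<omega>"] abs_ge_zero, of 2] by simp
    then have "0 \<le> ?s" "?s \<le> real n * B\<^sup>2"
      using sum_mono[of "{1..n}" "\<lambda>j. (Yim \<theta> u (X j \<omega>))\<^sup>2" "\<lambda>_. B\<^sup>2"] by (auto intro: sum_nonneg)
    ultimately have "\<bar>Y_offdiag X n \<theta> \<omega> u / (real n * (real n - 1)) - ?y\<^sup>2\<bar> \<le> 2 * B\<^sup>2 / (real n - 1)"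
      using abs_offdiag_mean_sub_square_le[of "real n" ?y B ?s] \<open>2 \<le> n\<close> abs_Ybar_le[OF th(1)] by simp
    moreover have "\<bar>?y\<^sup>2 - (\<mu> \<theta> u)\<^sup>2\<bar> \<le> \<eta> + B\<^sup>2 / \<eta> * (?y - \<mu> \<theta> u)\<^sup>2"
      by (rule abs_square_diff_le[OF abs_Ybar_le[OF th(1)] abs_mu_le[OF th(1)] \<open>0 < \<eta>\<close>])
    moreover have "B\<^sup>2 / \<eta> * (?y - \<mu> \<theta> u)\<^sup>2
        \<le> B\<^sup>2 / \<eta> * (2 * sq_dev n \<theta>' u \<omega> + 64 * r\<^sup>2 / c^4 * poly_weight u)"
      using transfer \<open>0 < \<eta>\<close> by (intro mult_left_mono) auto
    moreover have "indicator {u. \<bar>u\<bar> \<le> 1 / hn} u = (1::real)" using True by simp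
    ultimately show ?thesis using nonneg by (simp only: mult_1)
  next
    case False
    then have "1 < hn * \<bar>u\<bar>" using \<open>0 < hn\<close> by (simp add: not_le divide_less_eq mult.commute)
    also have "\<dots> \<le> hn * poly_weight u"
      using \<open>0 < hn\<close> poly_weight_ge(2)[of u] by (intro mult_left_mono) auto
    finally have "1 \<le> hn * poly_weight u" by simp
    then have "B\<^sup>2 \<le> B\<^sup>2 * hn * poly_weight u"
      using mult_left_mono[of 1 "hn * poly_weight u" "B\<^sup>2"] by (simp add: mult.assoc)
    moreover have "(\<mu> \<theta> u)\<^sup>2 \<le> B\<^sup>2" using power_mono[OF abs_mu_le[OF th(1), of u] abs_ge_zero, of 2] by simp
    moreover have "indicator {u. \<bar>u\<bar> \<le> 1 / hn} u = (0::real)" using False by simp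
    ultimately show ?thesis using nonneg \<open>0 < \<eta>\<close> by simp
  qed
qed

lemma Sn_deviation_bound:
  assumes th: "\<theta> \<in> \<Theta>" "\<theta>' \<in> \<Theta>" "dist \<theta> \<theta>' \<le> r" and "2 \<le> n" "0 < \<eta>" "0 < hn"
  shows "\<bar>Sn W X hn n \<theta> \<omega> - S \<theta>\<bar> \<le> 2 * B\<^sup>2 / (real n - 1) + \<eta>
          + B\<^sup>2 / \<eta> * (2 * int_sq_dev n \<theta>' \<omega> + 64 * r\<^sup>2 / c^4 * poly_moment) + B\<^sup>2 * hn * poly_moment"
proof -
  define F where "F u = indicator {u. \<bar>u\<bar> \<le> 1 / hn} u * Y_offdiag X n \<theta> \<omega> u / (real n * (real n - 1))" for u
  define G where "G u = 2 * B\<^sup>2 / (real n - 1) + \<eta>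
    + B\<^sup>2 / \<eta> * (2 * sq_dev n \<theta>' u \<omega> + 64 * r\<^sup>2 / c^4 * poly_weight u) + B\<^sup>2 * hn * poly_weight u" for u
  have pointwise: "\<bar>F u - (\<mu> \<theta> u)\<^sup>2\<bar> \<le> G u" for u
    unfolding F_def G_def by (rule Sn_integrand_deviation[OF assms])
  define K where "K = 2 * B\<^sup>2 / (real n - 1) + \<eta>"
  define V where "V u = 2 * sq_dev n \<theta>' u \<omega> + 64 * r\<^sup>2 / c^4 * poly_weight u" for u
  have G_eq: "G u = K + B\<^sup>2 / \<eta> * V u + B\<^sup>2 * hn * poly_weight u" for u
    by (simp add: G_def K_def V_def)
  have int_V: "integrable W V"
    unfolding V_def
    by (intro Bochner_Integration.integrable_add integrable_mult_right integrable_sq_dev[OF th(2)]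
        integrable_poly_weight)
  have int_G: "integrable W G"
    unfolding G_eq
    by (intro Bochner_Integration.integrable_add integrable_mult_right int_V integrable_poly_weight
        finite_measure.integrable_const[OF W_finite])
  have int_F: "integrable W F"
  proof (rule Bochner_Integration.integrable_bound[where f = "\<lambda>u. G u + (\<mu> \<theta> u)\<^sup>2"])
    show "integrable W (\<lambda>u. G u + (\<mu> \<theta> u)\<^sup>2)"
      by (rule Bochner_Integration.integrable_add[OF int_G integrable_mu_square[OF th(1)]])
    show "AE u in W. norm (F u) \<le> norm (G u + (\<mu> \<theta> u)\<^sup>2)"
    proof (rule AE_I2)
      fix u
      have "\<bar>F u\<bar> \<le> G u + (\<mu> \<theta> u)\<^sup>2"
        using pointwise[of u] zero_le_power2[of "\<mu> \<theta> u"] unfolding abs_le_iff by linarith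
      then show "norm (F u) \<le> norm (G u + (\<mu> \<theta> u)\<^sup>2)" by simp
    qed
  qed (simp add: F_def[abs_def])
  have "Sn W X hn n \<theta> \<omega> = (\<integral>u. F u \<partial>W)"
    by (simp add: Sn_eq_Y_offdiag F_def set_lebesgue_integral_def)
  then have "\<bar>Sn W X hn n \<theta> \<omega> - S \<theta>\<bar> = \<bar>\<integral>u. F u - (\<mu> \<theta> u)\<^sup>2 \<partial>W\<bar>"
    by (simp add: S_def Bochner_Integration.integral_diff[OF int_F integrable_mu_square[OF th(1)]])
  also have "\<dots> \<le> (\<integral>u. \<bar>F u - (\<mu> \<theta> u)\<^sup>2\<bar> \<partial>W)"
    by (rule integral_abs_bound)
  also have "\<dots> \<le> (\<integral>u. G u \<partial>W)"
    by (rule integral_mono[OF _ int_G pointwise])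
      (intro integrable_abs Bochner_Integration.integrable_diff int_F integrable_mu_square th(1))
  also have "(\<integral>u. G u \<partial>W) = K + B\<^sup>2 / \<eta> * (\<integral>u. V u \<partial>W) + B\<^sup>2 * hn * poly_moment"
    unfolding G_eq poly_moment_def using W_prob
    by (simp add: int_V integrable_poly_weight finite_measure.integrable_const[OF W_finite]
        Bochner_Integration.integral_add prob_space.prob_space)
  also have "(\<integral>u. V u \<partial>W) = 2 * int_sq_dev n \<theta>' \<omega> + 64 * r\<^sup>2 / c^4 * poly_moment"
    unfolding V_def int_sq_dev_def poly_moment_def
    by (simp add: integrable_sq_dev[OF th(2)] integrable_poly_weight Bochner_Integration.integral_add)
  finally show ?thesis by (simp add: K_def)
qed

lemma continuous_on_S: "continuous_on \<Theta> S"
proof (rule lipschitz_on_continuous_on)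
  show "lipschitz_on (4 * B * poly_moment / c^2) \<Theta> S"
    using S_lipschitz B_pos poly_moment_ge c_pos by (auto intro!: lipschitz_onI simp: dist_real_def)
qed

lemma S_separated:
  assumes "0 < \<epsilon>"
  obtains \<delta> where "0 < \<delta>" "\<And>\<theta>. \<theta> \<in> \<Theta> \<Longrightarrow> \<epsilon> \<le> dist \<theta> (p0, \<alpha>0, \<beta>0) \<Longrightarrow> \<delta> \<le> S \<theta>"
proof (cases "\<Theta> \<inter> {\<theta>. \<epsilon> \<le> dist \<theta> (p0, \<alpha>0, \<beta>0)} = {}")
  case True
  then show ?thesis using that[of 1] by auto
next
  case False
  let ?K = "\<Theta> \<inter> {\<theta>. \<epsilon> \<le> dist \<theta> (p0, \<alpha>0, \<beta>0)}"
  have "compact ?K"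
    by (intro compact_Int_closed Theta_compact closed_Collect_le continuous_on_const
        continuous_on_dist continuous_on_id)
  then obtain \<theta>m where \<theta>m: "\<theta>m \<in> ?K" and min: "\<forall>\<theta>\<in>?K. S \<theta>m \<le> S \<theta>"
    using continuous_attains_inf[OF _ False continuous_on_subset[OF continuous_on_S Int_lower1]] by blast
  have "0 < S \<theta>m" using \<theta>m \<open>0 < \<epsilon>\<close> by (intro S_pos) auto
  with min show ?thesis using that by blast
qed

definition "net_dev N n \<omega> = (\<Sum>t\<in>N. int_sq_dev n t \<omega>)"

lemma net_dev_measurable[measurable]: "net_dev N n \<in> borel_measurable M"
  unfolding net_dev_def[abs_def] by measurable

text \<open>Compare S_n with S at \<theta>, through its neighbour t in the net, and at the true
  parameter, where S vanishes.\<close>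
lemma minimiser_far_imp_net_dev_ge:
  assumes N: "finite N" "N \<subseteq> \<Theta>" "(p0, \<alpha>0, \<beta>0) \<in> N" and t: "t \<in> N" "\<theta> \<in> \<Theta>" "dist \<theta> t \<le> r"
    and \<delta>: "0 < \<delta>" "\<delta> \<le> S \<theta>" and r: "4096 * B\<^sup>2 * poly_moment * r\<^sup>2 \<le> \<delta>\<^sup>2 * c ^ 4"
    and n: "2 \<le> n" "0 < hn" "4 * B\<^sup>2 / (real n - 1) + 2 * B\<^sup>2 * hn * poly_moment \<le> \<delta> / 4"
    and minimiser: "Sn W X hn n \<theta> \<omega> \<le> Sn W X hn n (p0, \<alpha>0, \<beta>0) \<omega>"
  shows "\<delta>\<^sup>2 / (128 * B\<^sup>2) \<le> net_dev N n \<omega>"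
proof -
  define \<theta>0 where "\<theta>0 = (p0, \<alpha>0, \<beta>0)"
  define \<eta> where "\<eta> = \<delta> / 8"
  define V where "V = B\<^sup>2 / \<eta>"
  define T where "T = 2 * B\<^sup>2 / (real n - 1) + \<eta> + B\<^sup>2 * hn * poly_moment"
  define R where "R = 64 * r\<^sup>2 / c^4 * poly_moment"
  define Qt Q0 where "Qt = int_sq_dev n t \<omega>" and "Q0 = int_sq_dev n \<theta>0 \<omega>"
  have "\<theta>0 \<in> \<Theta>" "0 < \<eta>" using theta0 \<delta> by (auto simp: \<theta>0_def \<eta>_def)
  have "0 \<le> r" using zero_le_dist[of \<theta> t] t(3) by linarith
  have dev_t: "\<bar>Sn W X hn n \<theta> \<omega> - S \<theta>\<bar> \<le> T + V * (2 * Qt + R)"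
    using Sn_deviation_bound[OF t(2) subsetD[OF N(2) t(1)] t(3) n(1) \<open>0 < \<eta>\<close> n(2)]
    by (simp add: T_def V_def R_def Qt_def algebra_simps)
  have dev_0: "\<bar>Sn W X hn n \<theta>0 \<omega> - S \<theta>0\<bar> \<le> T + V * (2 * Q0 + R)"
    using Sn_deviation_bound[OF \<open>\<theta>0 \<in> \<Theta>\<close> \<open>\<theta>0 \<in> \<Theta>\<close> _ n(1) \<open>0 < \<eta>\<close> n(2)] \<open>0 \<le> r\<close>
    by (simp add: T_def V_def R_def Q0_def algebra_simps)
  have "2 * T \<le> \<delta> / 2" using n(3) by (simp add: T_def \<eta>_def)
  moreover have "2 * (V * R) \<le> \<delta> / 4"
  proof -
    have "c ^ 4 \<noteq> 0" using c_pos by simp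
    then have "2 * (V * R) = 4096 * B\<^sup>2 * poly_moment * r\<^sup>2 / (4 * \<delta> * c ^ 4)"
      using \<delta>(1) by (simp add: V_def R_def \<eta>_def field_simps)
    also have "\<dots> \<le> \<delta>\<^sup>2 * c ^ 4 / (4 * \<delta> * c ^ 4)"
      using r \<delta>(1) c_pos by (intro divide_right_mono) auto
    also have "\<dots> = \<delta> / 4" using \<open>c ^ 4 \<noteq> 0\<close> \<delta>(1) by (simp add: power2_eq_square)
    finally show ?thesis .
  qed
  moreover have "S \<theta>0 = 0" using S_theta0 by (simp add: \<theta>0_def)
  moreover have "V * (2 * Qt + R) + V * (2 * Q0 + R) = 2 * (V * R) + 2 * V * (Qt + Q0)"
    by (simp add: algebra_simps)
  ultimately have "\<delta> / 4 \<le> 2 * V * (Qt + Q0)"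
    using \<delta>(2) dev_t dev_0 minimiser unfolding abs_le_iff \<theta>0_def by linarith
  moreover have "Qt \<le> net_dev N n \<omega>" "Q0 \<le> net_dev N n \<omega>"
    unfolding net_dev_def Qt_def Q0_def \<theta>0_def
    by (rule member_le_sum[OF t(1) _ N(1)] member_le_sum[OF N(3) _ N(1)];
        use int_sq_dev_bounds N(2) in blast)+
  moreover have "0 \<le> V" using \<open>0 < \<eta>\<close> by (simp add: V_def)
  ultimately have "\<delta> / 4 \<le> 4 * V * net_dev N n \<omega>"
    using mult_left_mono[of "Qt + Q0" "2 * net_dev N n \<omega>" "2 * V"] by linarith
  then show ?thesis using \<delta>(1) B_pos by (simp add: V_def \<eta>_def field_simps power2_eq_square)
qed

lemma measure_net_dev_ge_le:
  assumes "finite N" "N \<subseteq> \<Theta>" "1 \<le> n" "0 < \<kappa>"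
  shows "measure M {\<omega> \<in> space M. \<kappa> \<le> net_dev N n \<omega>} \<le> real (card N) * 4 * B\<^sup>2 / (\<kappa> * real n)"
proof -
  have int: "integrable M (net_dev N n)"
    unfolding net_dev_def[abs_def] using assms(1,2)
    by (intro Bochner_Integration.integrable_sum integrable_int_sq_dev) auto
  have nonneg: "0 \<le> net_dev N n \<omega>" for \<omega>
    unfolding net_dev_def using assms(2) int_sq_dev_bounds by (intro sum_nonneg) blast
  have "measure M {\<omega> \<in> space M. \<kappa> \<le> net_dev N n \<omega>} \<le> (\<integral>\<omega>. net_dev N n \<omega> \<partial>M) / \<kappa>"
    by (rule integral_Markov_inequality_measure[OF int, of "space M"]) (use \<open>0 < \<kappa>\<close> nonneg in auto)
  also have "(\<integral>\<omega>. net_dev N n \<omega> \<partial>M) = (\<Sum>t\<in>N. \<integral>\<omega>. int_sq_dev n t \<omega> \<partial>M)"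
    unfolding net_dev_def by (rule Bochner_Integration.integral_sum) (use assms(2) integrable_int_sq_dev in blast)
  also have "\<dots> \<le> (\<Sum>t\<in>N. 4 * B\<^sup>2 / real n)"
    using assms by (intro sum_mono expectation_int_sq_dev_le) auto
  finally show ?thesis using \<open>0 < \<kappa>\<close> by (simp add: divide_right_mono field_simps)
qed

lemma eventually_Sn_error_small:
  assumes "h \<longlonglongrightarrow> 0" "0 < \<delta>"
  shows "eventually (\<lambda>n. 2 \<le> n \<and> 4 * B\<^sup>2 / (real n - 1) + 2 * B\<^sup>2 * h n * poly_moment \<le> \<delta> / 4) sequentially"
proof -
  have "(\<lambda>n. 4 * B\<^sup>2 / (real n - 1) + 2 * B\<^sup>2 * h n * poly_moment) \<longlonglongrightarrow> 0"
  proof (intro tendsto_add_zero tendsto_mult_left_zero tendsto_mult_right_zero assms(1))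
    show "(\<lambda>n. 4 * B\<^sup>2 / (real n - 1)) \<longlonglongrightarrow> 0"
      by (rule LIMSEQ_imp_Suc) (simp add: lim_const_over_n)
  qed
  then have "\<forall>\<^sub>F n in sequentially. 4 * B\<^sup>2 / (real n - 1) + 2 * B\<^sup>2 * h n * poly_moment < \<delta> / 4"
    by (rule order_tendstoD(2)) (use assms(2) in simp)
  with eventually_ge_at_top[of 2] show ?thesis by eventually_elim auto
qed

lemma consistency:
  assumes h_pos: "\<And>n. 0 < h n" and h_lim: "h \<longlonglongrightarrow> 0"
    and est_meas[measurable]: "\<And>n. \<theta>hat n \<in> borel_measurable M"
    and est_in: "\<And>n \<omega>. \<omega> \<in> space M \<Longrightarrow> \<theta>hat n \<omega> \<in> \<Theta>"
    and est_argmin: "\<And>n \<omega> \<theta>. \<omega> \<in> space M \<Longrightarrow> \<theta> \<in> \<Theta> \<Longrightarrow>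
                       Sn W X (h n) n (\<theta>hat n \<omega>) \<omega> \<le> Sn W X (h n) n \<theta> \<omega>"
    and "0 < \<epsilon>"
  shows "(\<lambda>n. measure M {\<omega> \<in> space M. dist (\<theta>hat n \<omega>) (p0, \<alpha>0, \<beta>0) > \<epsilon>}) \<longlonglongrightarrow> 0"
proof -
  obtain \<delta> where \<delta>: "0 < \<delta>" "\<And>\<theta>. \<theta> \<in> \<Theta> \<Longrightarrow> \<epsilon> \<le> dist \<theta> (p0, \<alpha>0, \<beta>0) \<Longrightarrow> \<delta> \<le> S \<theta>"
    using S_separated[OF \<open>0 < \<epsilon>\<close>] by blast
  define r where "r = \<delta> * c\<^sup>2 / (64 * B * sqrt poly_moment)"
  have "0 < r" using \<delta>(1) c_pos B_pos poly_moment_ge by (simp add: r_def)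
  have "r\<^sup>2 = \<delta>\<^sup>2 * c ^ 4 / (4096 * B\<^sup>2 * poly_moment)"
    unfolding r_def using poly_moment_ge
    by (simp add: power_divide power_mult_distrib real_sqrt_pow2 flip: power_mult)
  then have r_bound: "4096 * B\<^sup>2 * poly_moment * r\<^sup>2 \<le> \<delta>\<^sup>2 * c ^ 4"
    using B_pos poly_moment_ge by (simp add: field_simps)
  obtain N where N: "finite N" "N \<subseteq> \<Theta>" "(p0, \<alpha>0, \<beta>0) \<in> N" "\<And>\<theta>. \<theta> \<in> \<Theta> \<Longrightarrow> \<exists>t\<in>N. dist \<theta> t < r"
    using compact_finite_net[OF Theta_compact theta0 \<open>0 < r\<close>] by blast
  define \<kappa> where "\<kappa> = \<delta>\<^sup>2 / (128 * B\<^sup>2)"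
  have "0 < \<kappa>" using \<delta>(1) B_pos by (simp add: \<kappa>_def)
  define good where "good n \<longleftrightarrow> 2 \<le> n \<and> 4 * B\<^sup>2 / (real n - 1) + 2 * B\<^sup>2 * h n * poly_moment \<le> \<delta> / 4" for n
  have far_subset: "{\<omega> \<in> space M. dist (\<theta>hat n \<omega>) (p0, \<alpha>0, \<beta>0) > \<epsilon>} \<subseteq> {\<omega> \<in> space M. \<kappa> \<le> net_dev N n \<omega>}"
    if "good n" for n
  proof safe
    fix \<omega> assume \<omega>: "\<omega> \<in> space M" "\<epsilon> < dist (\<theta>hat n \<omega>) (p0, \<alpha>0, \<beta>0)"
    obtain t where t: "t \<in> N" "dist (\<theta>hat n \<omega>) t < r" using N(4) est_in[OF \<omega>(1)] by blast
    have "2 \<le> n" "4 * B\<^sup>2 / (real n - 1) + 2 * B\<^sup>2 * h n * poly_moment \<le> \<delta> / 4"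
      using that by (simp_all add: good_def)
    then show "\<kappa> \<le> net_dev N n \<omega>"
      unfolding \<kappa>_def
      by (rule minimiser_far_imp_net_dev_ge[OF N(1-3) t(1) est_in[OF \<omega>(1)] less_imp_le[OF t(2)]
            \<delta>(1) \<delta>(2)[OF est_in[OF \<omega>(1)] less_imp_le[OF \<omega>(2)]] r_bound _ h_pos _
            est_argmin[OF \<omega>(1) subsetD[OF N(2) N(3)]]])
  qed
  have "eventually good sequentially"
    unfolding good_def by (rule eventually_Sn_error_small[OF h_lim \<delta>(1)])
  then have "eventually (\<lambda>n. measure M {\<omega> \<in> space M. dist (\<theta>hat n \<omega>) (p0, \<alpha>0, \<beta>0) > \<epsilon>}
      \<le> real (card N) * 4 * B\<^sup>2 / \<kappa> / real n) sequentially"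
  proof (rule eventually_mono)
    fix n assume "good n"
    then have "measure M {\<omega> \<in> space M. dist (\<theta>hat n \<omega>) (p0, \<alpha>0, \<beta>0) > \<epsilon>}
        \<le> measure M {\<omega> \<in> space M. \<kappa> \<le> net_dev N n \<omega>}"
      by (intro finite_measure.finite_measure_mono[OF M_finite far_subset]) measurable
    also have "\<dots> \<le> real (card N) * 4 * B\<^sup>2 / (\<kappa> * real n)"
      using \<open>good n\<close> by (intro measure_net_dev_ge_le N(1,2) \<open>0 < \<kappa>\<close>) (simp add: good_def)
    finally show "measure M {\<omega> \<in> space M. dist (\<theta>hat n \<omega>) (p0, \<alpha>0, \<beta>0) > \<epsilon>}
        \<le> real (card N) * 4 * B\<^sup>2 / \<kappa> / real n" by simp
  qed
  from tendsto_sandwich[OF _ this tendsto_const lim_const_over_n] show ?thesis by simp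
qed

end

theorem theorem2:
  fixes \<Theta> :: "(real \<times> real \<times> real) set"
    and f :: "real \<Rightarrow> real" and bet L :: real
    and W :: "real measure"
    and M :: "'w measure" and X :: "nat \<Rightarrow> 'w \<Rightarrow> real"
    and p0 \<alpha>0 \<beta>0 :: real and h :: "nat \<Rightarrow> real"
    and \<theta>hat :: "nat \<Rightarrow> 'w \<Rightarrow> real \<times> real \<times> real"
  assumes Theta_compact: "compact \<Theta>"
    and Theta_sub: "\<Theta> \<subseteq> {(p, a, b). 0 < p \<and> p < 1/2 \<and> a \<noteq> b}"
    and f_meas: "f \<in> borel_measurable borel"
    and f_nonneg: "\<And>x. 0 \<le> f x"
    and f_dens: "(\<integral>\<^sup>+ x. ennreal (f x) \<partial>lborel) = 1"
    and f_symm: "\<And>x. f (- x) = f x"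
    and f_L2: "integrable lborel (\<lambda>x. (f x)\<^sup>2)"
    and bet_pos: "0 < bet" and L_pos: "0 < L"
    and f_smooth: "(\<integral>\<^sup>+ u. ennreal ((cmod (fourier_tr f u))\<^sup>2 * \<bar>u\<bar> powr (2 * bet)) \<partial>lborel)
                     \<le> ennreal L"
    and W_prob: "prob_space W"
    and W_sets: "sets W = sets borel"
    and W_ac: "absolutely_continuous lborel W"
    and W_support: "\<And>U. open U \<Longrightarrow> U \<noteq> {} \<Longrightarrow> emeasure W U > 0"
    and W_moment: "integrable W (\<lambda>u. 1 + \<bar>u\<bar> + u\<^sup>2 + \<bar>u\<bar> ^ 3)"
    and theta0: "(p0, \<alpha>0, \<beta>0) \<in> \<Theta>"
    and M_prob: "prob_space M"
    and X_indep: "prob_space.indep_vars M (\<lambda>_. borel) X UNIV"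
    and X_distr: "\<And>i. distributed M lborel (X i)
                    (\<lambda>x. ennreal (p0 * f (x - \<alpha>0) + (1 - p0) * f (x - \<beta>0)))"
    and h_pos: "\<And>n. 0 < h n"
    and h_lim: "h \<longlonglongrightarrow> 0"
    and est_meas: "\<And>n. \<theta>hat n \<in> borel_measurable M"
    and est_in: "\<And>n \<omega>. \<omega> \<in> space M \<Longrightarrow> \<theta>hat n \<omega> \<in> \<Theta>"
    and est_argmin: "\<And>n \<omega> \<theta>. \<omega> \<in> space M \<Longrightarrow> \<theta> \<in> \<Theta> \<Longrightarrow>
                       Sn W X (h n) n (\<theta>hat n \<omega>) \<omega> \<le> Sn W X (h n) n \<theta> \<omega>"
  shows "\<forall>\<epsilon>>0. (\<lambda>n. measure M {\<omega> \<in> space M. dist (\<theta>hat n \<omega>) (p0, \<alpha>0, \<beta>0) > \<epsilon>})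
                 \<longlonglongrightarrow> 0"
proof -
  \<comment> \<open>f_L2, f_smooth and W_ac only matter for rates of convergence, not for consistency.\<close>
  have "0 \<le> p0" "p0 \<le> 1" using theta0 Theta_sub by auto
  then interpret mixture_contrast f M X p0 \<alpha>0 \<beta>0 \<Theta> W
    unfolding mixture_contrast_def mixture_contrast_axioms_def mixture_sample_def
    using f_meas f_nonneg f_dens f_symm M_prob X_distr Theta_compact Theta_sub theta0
      W_prob W_sets W_support W_moment X_indep
    by auto
  show ?thesis
    using consistency[OF h_pos h_lim est_meas est_in est_argmin] by blast
qed

end
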